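(* Let $R=\bigoplus_{\alpha\in\Gamma}R_{\alpha}$ be a graded integral domain and let $0\neq f,g\in R_H[X]$. Then there is an integer $m\geq1$ such that $A_f^{m+1}A_g=A_f^mA_{fg}$. In particular, if $\star$ is an e.a.b. semistar operation on $R$, then $A_{fg}^{\star}=(A_fA_g)^{\star}$.
   Context: $\Gamma$ is a commutative cancellative monoid (written additively) whose quotient group $\langle\Gamma\rangle$ is torsion-free. A graded integral domain $R=\bigoplus_{\alpha\in\Gamma}R_\alpha$ is an integral domain that is the direct sum of additive subgroups $R_\alpha$ with $R_\alpha R_\beta\subseteq R_{\alpha+\beta}$. $K$ is its quotient field, $H$ the set of nonzero homogeneous elements of $R$, and $R_H$ (graded by $\langle\Gamma\rangle$) the homogeneous quotient field. For $a\in R_H$, $C(a)$ is the $R$-submodule of $R_H$ generated by the homogeneous components of $a$; for $f=f_0+f_1X+\cdots+f_nX^n\in R_H[X]$, $A_f:=\sum_{i=0}^nC(f_i)$. A semistar operation on $R$ is a map $\star$ from the set of nonzero $R$-submodules of $K$ to itself such that for all $0\ne x\in K$ and $E,F$: $(xE)^\star=xE^\star$; $E\subseteq F\Rightarrow E^\star\subseteq F^\star$; $E\subseteq E^\star$; $(E^\star)^\star=E^\star$. It is e.a.b. if for all nonzero finitely generated fractional ideals $E,F,G$ of $R$, $(EF)^\star\subseteq(EG)^\star$ implies $F^\star\subseteq G^\star$. *)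

theory Defs
  imports "HOL-Computational_Algebra.Polynomial"
begin

text \<open>The monoid Gamma is modelled as a subset of an abelian group type 'g that
  contains 0 and is closed under addition (hence cancellative); its quotient group
  is the subgroup of differences, which is required to be torsion-free.\<close>

definition nsmul :: "nat \<Rightarrow> 'g::ab_group_add \<Rightarrow> 'g" where
  "nsmul n x = (((+) x) ^^ n) 0"

definition submonoid_add :: "'g::ab_group_add set \<Rightarrow> bool" where
  "submonoid_add \<Gamma> \<longleftrightarrow> 0 \<in> \<Gamma> \<and> (\<forall>a\<in>\<Gamma>. \<forall>b\<in>\<Gamma>. a + b \<in> \<Gamma>)"

definition quot_group :: "'g::ab_group_add set \<Rightarrow> 'g set" where
  "quot_group \<Gamma> = {a - b | a b. a \<in> \<Gamma> \<and> b \<in> \<Gamma>}"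

definition torsion_free_set :: "'g::ab_group_add set \<Rightarrow> bool" where
  "torsion_free_set G \<longleftrightarrow> (\<forall>x\<in>G. \<forall>n::nat. n > 0 \<longrightarrow> nsmul n x = 0 \<longrightarrow> x = 0)"

definition subring_of :: "'k::field set \<Rightarrow> bool" where
  "subring_of R \<longleftrightarrow> 0 \<in> R \<and> 1 \<in> R \<and>
     (\<forall>x\<in>R. \<forall>y\<in>R. x + y \<in> R \<and> x * y \<in> R) \<and> (\<forall>x\<in>R. - x \<in> R)"

text \<open>R is a subring of the field type 'k, and 'k is its quotient field K.\<close>
definition quotient_field_of :: "'k::field set \<Rightarrow> bool" where
  "quotient_field_of R \<longleftrightarrow> subring_of R \<and>
     (\<forall>x::'k. \<exists>a\<in>R. \<exists>b\<in>R. b \<noteq> 0 \<and> x = a / b)"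

text \<open>Rg alpha is the homogeneous part of degree alpha (set to {0} for alpha outside Gamma).\<close>
definition graded_domain :: "'g::ab_group_add set \<Rightarrow> ('g \<Rightarrow> 'k::field set) \<Rightarrow> 'k set \<Rightarrow> bool" where
  "graded_domain \<Gamma> Rg R \<longleftrightarrow>
     submonoid_add \<Gamma> \<and> torsion_free_set (quot_group \<Gamma>) \<and> quotient_field_of R \<and>
     (\<forall>\<alpha>. 0 \<in> Rg \<alpha> \<and> (\<forall>x\<in>Rg \<alpha>. \<forall>y\<in>Rg \<alpha>. x + y \<in> Rg \<alpha> \<and> - x \<in> Rg \<alpha>)) \<and>
     (\<forall>\<alpha>. \<alpha> \<notin> \<Gamma> \<longrightarrow> Rg \<alpha> = {0}) \<and>
     (\<forall>\<alpha> \<beta>. \<forall>x\<in>Rg \<alpha>. \<forall>y\<in>Rg \<beta>. x * y \<in> Rg (\<alpha> + \<beta>)) \<and>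
     R = {sum x S | x S. finite S \<and> (\<forall>\<alpha>\<in>S. x \<alpha> \<in> Rg \<alpha>)} \<and>
     (\<forall>x S. finite S \<and> (\<forall>\<alpha>\<in>S. x \<alpha> \<in> Rg \<alpha>) \<and> sum x S = 0 \<longrightarrow> (\<forall>\<alpha>\<in>S. x \<alpha> = 0))"

definition homog_nz :: "'g::ab_group_add set \<Rightarrow> ('g \<Rightarrow> 'k::field set) \<Rightarrow> 'k set" where
  "homog_nz \<Gamma> Rg = (\<Union>\<alpha>\<in>\<Gamma>. Rg \<alpha>) - {0}"

definition RH :: "'k::field set \<Rightarrow> ('g::ab_group_add \<Rightarrow> 'k set) \<Rightarrow> 'g set \<Rightarrow> 'k set" where
  "RH R Rg \<Gamma> = {b / h | b h. b \<in> R \<and> h \<in> homog_nz \<Gamma> Rg}"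

definition RH_deg :: "('g::ab_group_add \<Rightarrow> 'k::field set) \<Rightarrow> 'g \<Rightarrow> 'k set" where
  "RH_deg Rg \<delta> = {b / h | b h \<alpha> \<beta>. b \<in> Rg \<alpha> \<and> h \<in> Rg \<beta> \<and> h \<noteq> 0 \<and> \<delta> = \<alpha> - \<beta>}"

definition hcomp :: "('g::ab_group_add \<Rightarrow> 'k::field set) \<Rightarrow> 'g \<Rightarrow> 'k \<Rightarrow> 'k" where
  "hcomp Rg \<delta> a = (THE c. \<exists>x S. finite S \<and> (\<forall>\<gamma>\<in>S. x \<gamma> \<in> RH_deg Rg \<gamma>) \<and>
       a = sum x S \<and> c = (if \<delta> \<in> S then x \<delta> else 0))"

definition rspan :: "'k::field set \<Rightarrow> 'k set \<Rightarrow> 'k set" where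
  "rspan R S = {sum (\<lambda>s. r s * s) T | r T. finite T \<and> T \<subseteq> S \<and> (\<forall>s\<in>T. r s \<in> R)}"

definition mmul :: "'k::field set \<Rightarrow> 'k set \<Rightarrow> 'k set \<Rightarrow> 'k set" where
  "mmul R E F = rspan R {e * f | e f. e \<in> E \<and> f \<in> F}"

definition mpow :: "'k::field set \<Rightarrow> 'k set \<Rightarrow> nat \<Rightarrow> 'k set" where
  "mpow R E n = ((mmul R E) ^^ n) R"

definition Cont :: "'k::field set \<Rightarrow> ('g::ab_group_add \<Rightarrow> 'k set) \<Rightarrow> 'k \<Rightarrow> 'k set" where
  "Cont R Rg a = rspan R (range (\<lambda>\<delta>. hcomp Rg \<delta> a))"

definition Af :: "'k::field set \<Rightarrow> ('g::ab_group_add \<Rightarrow> 'k set) \<Rightarrow> 'k poly \<Rightarrow> 'k set" where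
  "Af R Rg f = rspan R (\<Union>i\<in>{0..degree f}. Cont R Rg (coeff f i))"

definition rsubmodule :: "'k::field set \<Rightarrow> 'k set \<Rightarrow> bool" where
  "rsubmodule R E \<longleftrightarrow> 0 \<in> E \<and> (\<forall>x\<in>E. \<forall>y\<in>E. x + y \<in> E) \<and> (\<forall>r\<in>R. \<forall>x\<in>E. r * x \<in> E)"

definition nz_submodule :: "'k::field set \<Rightarrow> 'k set \<Rightarrow> bool" where
  "nz_submodule R E \<longleftrightarrow> rsubmodule R E \<and> E \<noteq> {0}"

definition semistar :: "'k::field set \<Rightarrow> ('k set \<Rightarrow> 'k set) \<Rightarrow> bool" where
  "semistar R st \<longleftrightarrow>
     (\<forall>E. nz_submodule R E \<longrightarrow> nz_submodule R (st E)) \<and>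
     (\<forall>x E. x \<noteq> 0 \<and> nz_submodule R E \<longrightarrow> st ((\<lambda>e. x * e) ` E) = (\<lambda>e. x * e) ` st E) \<and>
     (\<forall>E F. nz_submodule R E \<and> nz_submodule R F \<and> E \<subseteq> F \<longrightarrow> st E \<subseteq> st F) \<and>
     (\<forall>E. nz_submodule R E \<longrightarrow> E \<subseteq> st E) \<and>
     (\<forall>E. nz_submodule R E \<longrightarrow> st (st E) = st E)"

definition frac_ideal :: "'k::field set \<Rightarrow> 'k set \<Rightarrow> bool" where
  "frac_ideal R E \<longleftrightarrow> rsubmodule R E \<and> (\<exists>d\<in>R. d \<noteq> 0 \<and> (\<lambda>e. d * e) ` E \<subseteq> R)"

definition fg_frac_ideal :: "'k::field set \<Rightarrow> 'k set \<Rightarrow> bool" where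
  "fg_frac_ideal R E \<longleftrightarrow> frac_ideal R E \<and> E \<noteq> {0} \<and> (\<exists>T. finite T \<and> E = rspan R T)"

definition eab :: "'k::field set \<Rightarrow> ('k set \<Rightarrow> 'k set) \<Rightarrow> bool" where
  "eab R st \<longleftrightarrow> semistar R st \<and>
     (\<forall>E F G. fg_frac_ideal R E \<and> fg_frac_ideal R F \<and> fg_frac_ideal R G \<longrightarrow>
        st (mmul R E F) \<subseteq> st (mmul R E G) \<longrightarrow> st F \<subseteq> st G)"

end

theory Submission
  imports Defs "HOL-Library.Product_Plus"
begin

text \<open>
  Write the homogeneous components of the coefficients of \<open>f\<close> as a finitely supported function
  \<open>F\<close> on \<open>\<nat> \<times> \<langle>\<Gamma>\<rangle>\<close> (coefficient index, degree); then \<open>A\<^sub>f\<close> is the \<open>R\<close>-module generated by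
  the values of \<open>F\<close>, and the components of \<open>fg\<close> are given by the convolution of \<open>F\<close> and \<open>G\<close>.
  Since \<open>\<langle>\<Gamma>\<rangle>\<close> is torsion-free it admits a total order compatible with addition, so
  \<open>\<nat> \<times> \<langle>\<Gamma>\<rangle>\<close> has the unique product property: of two finite nonempty sets, the
  lexicographic maxima give a sum with exactly one representation.  This is all that is needed
  for Northcott's proof of the Dedekind--Mertens lemma
  \<open>c(F)\<^bsup>n\<^esup> c(G) \<subseteq> c(F)\<^bsup>n-1\<^esup> c(FG)\<close>, \<open>n = |supp G|\<close>, by induction on \<open>|supp F| + |supp G|\<close>:
  splitting off the terms \<open>a\<close>, \<open>b\<close> at the unique pair, \<open>ab\<close> is a coefficient of \<open>FG\<close>.
  Together with \<open>c(FG) \<subseteq> c(F) c(G)\<close> this gives \<open>A\<^sub>f\<^bsup>m+1\<^esup>A\<^sub>g = A\<^sub>f\<^bsup>m\<^esup>A\<^sub>f\<^sub>g\<close>, and an e.a.b. operation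
  cancels the finitely generated fractional ideal \<open>A\<^sub>f\<^bsup>m\<^esup>\<close>.
\<close>

section \<open>Modules over a subring of a field\<close>

locale subring =
  fixes R :: "'k::field set"
  assumes subring: "subring_of R"
begin

lemma zero_mem: "0 \<in> R" and one_mem: "1 \<in> R"
  and add_mem: "x \<in> R \<Longrightarrow> y \<in> R \<Longrightarrow> x + y \<in> R"
  and mult_mem: "x \<in> R \<Longrightarrow> y \<in> R \<Longrightarrow> x * y \<in> R"
  and uminus_mem: "x \<in> R \<Longrightarrow> - x \<in> R"
  using subring unfolding subring_of_def by auto

lemma rsubmodule_zero: "rsubmodule R E \<Longrightarrow> 0 \<in> E"
  and rsubmodule_add: "rsubmodule R E \<Longrightarrow> x \<in> E \<Longrightarrow> y \<in> E \<Longrightarrow> x + y \<in> E"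
  and rsubmodule_smult: "rsubmodule R E \<Longrightarrow> r \<in> R \<Longrightarrow> x \<in> E \<Longrightarrow> r * x \<in> E"
  by (simp_all add: rsubmodule_def)

lemma rsubmodule_diff: "rsubmodule R E \<Longrightarrow> x \<in> E \<Longrightarrow> y \<in> E \<Longrightarrow> x - y \<in> E"
  using rsubmodule_add[of E x "(- 1) * y"] rsubmodule_smult[of E "- 1" y] uminus_mem[OF one_mem]
  by simp

lemma rsubmodule_sum:
  assumes "rsubmodule R E" "finite T" "\<And>t. t \<in> T \<Longrightarrow> h t \<in> E"
  shows "sum h T \<in> E"
  using assms(2,3) by induction (simp_all add: assms(1) rsubmodule_zero rsubmodule_add)

lemma rsubmodule_R: "rsubmodule R R"
  unfolding rsubmodule_def by (auto intro: zero_mem add_mem mult_mem)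

lemma rsubmodule_singleton_zero: "rsubmodule R {0}"
  unfolding rsubmodule_def by auto

lemma rspan_base: "s \<in> S \<Longrightarrow> s \<in> rspan R S"
  unfolding rspan_def by (intro CollectI exI[of _ "\<lambda>_. 1"] exI[of _ "{s}"]) (simp add: one_mem)

lemma rsubmodule_rspan [simp]: "rsubmodule R (rspan R S)"
  unfolding rsubmodule_def
proof (intro conjI ballI)
  show "0 \<in> rspan R S"
    unfolding rspan_def by (intro CollectI exI[of _ "\<lambda>_. 0"] exI[of _ "{}"]) simp
next
  fix x y assume "x \<in> rspan R S" "y \<in> rspan R S"
  then obtain r1 T1 r2 T2
    where x: "x = (\<Sum>s\<in>T1. r1 s * s)" "finite T1" "T1 \<subseteq> S" "\<forall>s\<in>T1. r1 s \<in> R"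
      and y: "y = (\<Sum>s\<in>T2. r2 s * s)" "finite T2" "T2 \<subseteq> S" "\<forall>s\<in>T2. r2 s \<in> R"
    unfolding rspan_def by blast
  define r where "r s = (if s \<in> T1 then r1 s else 0) + (if s \<in> T2 then r2 s else 0)" for s
  have "(\<Sum>s\<in>T1 \<union> T2. r s * s) =
      (\<Sum>s\<in>T1 \<union> T2. if s \<in> T1 then r1 s * s else 0) + (\<Sum>s\<in>T1 \<union> T2. if s \<in> T2 then r2 s * s else 0)"
    unfolding sum.distrib[symmetric] by (rule sum.cong) (auto simp: r_def distrib_right)
  also have "\<dots> = x + y"
    using x y by (simp add: sum.inter_restrict[symmetric] Int_Un_eq)
  finally have "x + y = (\<Sum>s\<in>T1 \<union> T2. r s * s)" ..
  moreover have "\<forall>s\<in>T1 \<union> T2. r s \<in> R"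
    using x y by (auto simp: r_def intro!: add_mem zero_mem)
  ultimately show "x + y \<in> rspan R S"
    unfolding rspan_def using x y by blast
next
  fix c x assume c: "c \<in> R" and "x \<in> rspan R S"
  then obtain r T where x: "x = (\<Sum>s\<in>T. r s * s)" "finite T" "T \<subseteq> S" "\<forall>s\<in>T. r s \<in> R"
    unfolding rspan_def by blast
  have "c * x = (\<Sum>s\<in>T. (c * r s) * s)"
    using x by (simp add: sum_distrib_left mult.assoc)
  moreover have "\<forall>s\<in>T. c * r s \<in> R"
    using x c by (auto intro: mult_mem)
  ultimately show "c * x \<in> rspan R S"
    unfolding rspan_def using x by (intro CollectI exI[of _ "\<lambda>s. c * r s"] exI[of _ T]) auto
qed

lemma rspan_minimal:
  assumes "rsubmodule R E" "S \<subseteq> E"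
  shows "rspan R S \<subseteq> E"
proof
  fix x assume "x \<in> rspan R S"
  then obtain r T where "x = (\<Sum>s\<in>T. r s * s)" "finite T" "T \<subseteq> S" "\<forall>s\<in>T. r s \<in> R"
    unfolding rspan_def by blast
  then show "x \<in> E"
    using assms by (simp add: subset_iff rsubmodule_sum rsubmodule_smult)
qed

lemma rspan_mono: "S \<subseteq> T \<Longrightarrow> rspan R S \<subseteq> rspan R T"
  by (meson rspan_minimal rsubmodule_rspan rspan_base subset_iff)

lemma rspan_eq: "rsubmodule R E \<Longrightarrow> rspan R E = E"
  using rspan_minimal rspan_base by blast

lemma rspan_one: "rspan R {1} = R"
proof
  show "rspan R {1} \<subseteq> R"
    by (rule rspan_minimal[OF rsubmodule_R]) (simp add: one_mem)
  show "R \<subseteq> rspan R {1}"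
    using rsubmodule_smult[OF rsubmodule_rspan, of _ 1 "{1}"] rspan_base[of 1 "{1}"] by fastforce
qed

lemma mult_rspan_mem:
  assumes N: "rsubmodule R N" and ST: "\<And>s t. s \<in> S \<Longrightarrow> t \<in> T \<Longrightarrow> s * t \<in> N"
    and x: "x \<in> rspan R S" and y: "y \<in> rspan R T"
  shows "x * y \<in> N"
proof -
  have "rsubmodule R {x. x * t \<in> N}" for t
    using N unfolding rsubmodule_def by (auto simp: distrib_right mult.assoc)
  then have "\<forall>t\<in>T. x * t \<in> N"
    using rspan_minimal[of "{x. x * _ \<in> N}" S] ST x by blast
  then have "rspan R T \<subseteq> {y. x * y \<in> N}"
    by (intro rspan_minimal) (use N in \<open>auto simp: rsubmodule_def distrib_left mult.left_commute\<close>)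
  then show ?thesis
    using y by blast
qed

lemma rsubmodule_mmul [simp]: "rsubmodule R (mmul R E F)"
  unfolding mmul_def by simp

lemma mmul_mem: "e \<in> E \<Longrightarrow> f \<in> F \<Longrightarrow> e * f \<in> mmul R E F"
  unfolding mmul_def by (rule rspan_base) blast

lemma mmul_minimal:
  "rsubmodule R N \<Longrightarrow> (\<And>e f. e \<in> E \<Longrightarrow> f \<in> F \<Longrightarrow> e * f \<in> N) \<Longrightarrow> mmul R E F \<subseteq> N"
  unfolding mmul_def by (rule rspan_minimal) auto

lemma mmul_mono: "E \<subseteq> E' \<Longrightarrow> F \<subseteq> F' \<Longrightarrow> mmul R E F \<subseteq> mmul R E' F'"
  by (meson mmul_minimal mmul_mem rsubmodule_mmul subsetD)

lemma mmul_commute: "mmul R E F = mmul R F E"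
  unfolding mmul_def by (rule arg_cong[where f = "rspan R"]) (auto, (metis mult.commute)+)

lemma mmul_rspan_minimal:
  assumes "rsubmodule R N" "\<And>s t. s \<in> S \<Longrightarrow> t \<in> T \<Longrightarrow> s * t \<in> N"
  shows "mmul R (rspan R S) (rspan R T) \<subseteq> N"
  by (rule mmul_minimal[OF assms(1)]) (rule mult_rspan_mem[OF assms])

lemma mmul_rspan: "mmul R (rspan R S) (rspan R T) = rspan R {s * t | s t. s \<in> S \<and> t \<in> T}"
proof
  show "mmul R (rspan R S) (rspan R T) \<subseteq> rspan R {s * t | s t. s \<in> S \<and> t \<in> T}"
    by (rule mmul_rspan_minimal[OF rsubmodule_rspan]) (auto intro: rspan_base)
  show "rspan R {s * t | s t. s \<in> S \<and> t \<in> T} \<subseteq> mmul R (rspan R S) (rspan R T)"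
    by (rule rspan_minimal[OF rsubmodule_mmul]) (auto intro!: mmul_mem rspan_base)
qed

lemma mmul_assoc:
  assumes "rsubmodule R E" "rsubmodule R F" "rsubmodule R G"
  shows "mmul R (mmul R E F) G = mmul R E (mmul R F G)"
proof
  have "mmul R (mmul R E F) (rspan R G) \<subseteq> mmul R E (mmul R F G)"
    unfolding mmul_def[of R E F]
  proof (rule mmul_rspan_minimal[OF rsubmodule_mmul])
    fix s t assume "s \<in> {e * f |e f. e \<in> E \<and> f \<in> F}" and t: "t \<in> G"
    then obtain e f where "s = e * f" "e \<in> E" "f \<in> F" by blast
    then show "s * t \<in> mmul R E (mmul R F G)"
      using mmul_mem[OF \<open>e \<in> E\<close> mmul_mem[OF \<open>f \<in> F\<close> t]] by (simp add: mult.assoc)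
  qed
  then show "mmul R (mmul R E F) G \<subseteq> mmul R E (mmul R F G)"
    using rspan_eq[OF assms(3)] by simp
  have "mmul R (rspan R E) (mmul R F G) \<subseteq> mmul R (mmul R E F) G"
    unfolding mmul_def[of R F G]
  proof (rule mmul_rspan_minimal[OF rsubmodule_mmul])
    fix s t assume s: "s \<in> E" and "t \<in> {f * g |f g. f \<in> F \<and> g \<in> G}"
    then obtain f g where "t = f * g" "f \<in> F" "g \<in> G" by blast
    then show "s * t \<in> mmul R (mmul R E F) G"
      using mmul_mem[OF mmul_mem[OF s \<open>f \<in> F\<close>] \<open>g \<in> G\<close>] by (simp add: mult.assoc)
  qed
  then show "mmul R E (mmul R F G) \<subseteq> mmul R (mmul R E F) G"
    using rspan_eq[OF assms(1)] by simp
qed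

lemma mmul_left_commute:
  "rsubmodule R E \<Longrightarrow> rsubmodule R F \<Longrightarrow> rsubmodule R G \<Longrightarrow>
    mmul R E (mmul R F G) = mmul R F (mmul R E G)"
  by (metis mmul_assoc mmul_commute)

lemmas mmul_ac = mmul_commute mmul_assoc mmul_left_commute

lemma mmul_R_left:
  assumes "rsubmodule R E"
  shows "mmul R R E = E"
proof
  show "mmul R R E \<subseteq> E"
    by (rule mmul_minimal[OF assms]) (simp add: assms rsubmodule_smult)
  show "E \<subseteq> mmul R R E"
    using mmul_mem[OF one_mem, of _ E] by fastforce
qed

lemma mmul_zero_right: "mmul R E {0} = {0}"
proof
  show "mmul R E {0} \<subseteq> {0}"
    by (rule mmul_minimal[OF rsubmodule_singleton_zero]) simp
qed (simp add: rsubmodule_zero)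

lemma mmul_zero_left: "mmul R {0} E = {0}"
  using mmul_zero_right mmul_commute by metis

definition msum :: "'k set \<Rightarrow> 'k set \<Rightarrow> 'k set"
  where "msum E F = rspan R (E \<union> F)"

lemma rsubmodule_msum [simp]: "rsubmodule R (msum E F)"
  unfolding msum_def by simp

lemma msum_upper1: "E \<subseteq> msum E F" and msum_upper2: "F \<subseteq> msum E F"
  unfolding msum_def using rspan_base by blast+

lemma msum_least: "rsubmodule R N \<Longrightarrow> E \<subseteq> N \<Longrightarrow> F \<subseteq> N \<Longrightarrow> msum E F \<subseteq> N"
  unfolding msum_def by (rule rspan_minimal) auto

lemma msum_mono: "E \<subseteq> E' \<Longrightarrow> F \<subseteq> F' \<Longrightarrow> msum E F \<subseteq> msum E' F'"
  unfolding msum_def by (rule rspan_mono) auto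

lemma mmul_msum_distrib_left: "mmul R E (msum F G) \<subseteq> msum (mmul R E F) (mmul R E G)"
proof (rule mmul_minimal[OF rsubmodule_msum])
  fix e x assume e: "e \<in> E" and x: "x \<in> msum F G"
  show "e * x \<in> msum (mmul R E F) (mmul R E G)"
  proof (rule mult_rspan_mem[OF rsubmodule_msum, of "{e}" "F \<union> G"])
    fix s t assume "s \<in> {e}" "t \<in> F \<union> G"
    then have "s * t \<in> mmul R E F \<union> mmul R E G"
      using e mmul_mem by blast
    then show "s * t \<in> msum (mmul R E F) (mmul R E G)"
      unfolding msum_def by (rule rspan_base)
  qed (use x in \<open>simp_all add: msum_def rspan_base\<close>)
qed

lemma mmul_msum_distrib_right: "mmul R (msum F G) E \<subseteq> msum (mmul R F E) (mmul R G E)"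
  using mmul_msum_distrib_left[of E F G] by (simp add: mmul_commute)

lemma mpow_0: "mpow R E 0 = R"
  by (simp add: mpow_def)

lemma mpow_Suc: "mpow R E (Suc n) = mmul R E (mpow R E n)"
  by (simp add: mpow_def)

lemma rsubmodule_mpow [simp]: "rsubmodule R (mpow R E n)"
  by (cases n) (simp_all add: mpow_0 mpow_Suc rsubmodule_R)

lemma mpow_mono: "E \<subseteq> E' \<Longrightarrow> mpow R E n \<subseteq> mpow R E' n"
  by (induction n) (simp_all add: mpow_0 mpow_Suc mmul_mono)

end

section \<open>The Dedekind--Mertens lemma for monoids with unique products\<close>

definition supp :: "('m \<Rightarrow> 'k::zero) \<Rightarrow> 'm set"
  where "supp F = {u. F u \<noteq> 0}"

text \<open>Sums range over the supports, so this is the convolution product only for finitely supported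
  \<open>F\<close> and \<open>G\<close>; the lemmas below assume finite supports.\<close>

definition convolution :: "('m::plus \<Rightarrow> 'k::comm_ring) \<Rightarrow> ('m \<Rightarrow> 'k) \<Rightarrow> 'm \<Rightarrow> 'k"
  where "convolution F G m = (\<Sum>u\<in>supp F. \<Sum>v\<in>supp G. if u + v = m then F u * G v else 0)"

definition unique_product :: "'m::plus set \<Rightarrow> bool"
  where "unique_product D \<longleftrightarrow>
    (\<forall>S T. finite S \<and> finite T \<and> S \<noteq> {} \<and> T \<noteq> {} \<and> S \<subseteq> D \<and> T \<subseteq> D \<longrightarrow>
      (\<exists>u\<in>S. \<exists>v\<in>T. \<forall>u'\<in>S. \<forall>v'\<in>T. u' + v' = u + v \<longrightarrow> u' = u \<and> v' = v))"

definition rcontent :: "'k::field set \<Rightarrow> ('m \<Rightarrow> 'k) \<Rightarrow> 'k set"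
  where "rcontent R F = rspan R (range F)"

lemma supp_fun_upd_zero: "supp (F(u := 0)) = supp F - {u}"
  by (auto simp: supp_def)

lemma convolution_superset:
  assumes "finite X" "supp F \<subseteq> X" "finite Y" "supp G \<subseteq> Y"
  shows "convolution F G m = (\<Sum>p\<in>X. \<Sum>q\<in>Y. if p + q = m then F p * G q else 0)"
proof -
  have "convolution F G m = (\<Sum>p\<in>supp F. \<Sum>q\<in>Y. if p + q = m then F p * G q else 0)"
    unfolding convolution_def
    by (rule sum.cong[OF refl], rule sum.mono_neutral_left) (use assms in \<open>auto simp: supp_def\<close>)
  also have "\<dots> = (\<Sum>p\<in>X. \<Sum>q\<in>Y. if p + q = m then F p * G q else 0)"
    by (rule sum.mono_neutral_left) (use assms in \<open>auto simp: supp_def cong: if_cong\<close>)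
  finally show ?thesis .
qed

lemma convolution_fun_upd_left:
  assumes "u \<in> supp F" "finite (supp F)"
  shows "convolution F G m =
    convolution (F(u := 0)) G m + F u * (\<Sum>v\<in>supp G. if u + v = m then G v else 0)"
proof -
  have "convolution F G m = (\<Sum>v\<in>supp G. if u + v = m then F u * G v else 0) +
      (\<Sum>w\<in>supp F - {u}. \<Sum>v\<in>supp G. if w + v = m then F w * G v else 0)"
    unfolding convolution_def using assms by (simp add: sum.remove)
  also have "(\<Sum>w\<in>supp F - {u}. \<Sum>v\<in>supp G. if w + v = m then F w * G v else 0) =
      convolution (F(u := 0)) G m"
    unfolding convolution_def supp_fun_upd_zero by (intro sum.cong) auto
  also have "(\<Sum>v\<in>supp G. if u + v = m then F u * G v else 0) =
      F u * (\<Sum>v\<in>supp G. if u + v = m then G v else 0)"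
    by (subst sum_distrib_left) (rule sum.cong; simp)
  finally show ?thesis
    by (simp only: add.commute)
qed

lemma convolution_fun_upd_right:
  assumes "v \<in> supp G" "finite (supp G)"
  shows "convolution F G m =
    convolution F (G(v := 0)) m + G v * (\<Sum>u\<in>supp F. if u + v = m then F u else 0)"
proof -
  have "convolution F G m = (\<Sum>u\<in>supp F. (if u + v = m then F u * G v else 0) +
      (\<Sum>w\<in>supp G - {v}. if u + w = m then F u * G w else 0))"
    unfolding convolution_def using assms by (intro sum.cong) (simp_all add: sum.remove)
  also have "\<dots> = (\<Sum>u\<in>supp F. if u + v = m then F u * G v else 0) + convolution F (G(v := 0)) m"
    unfolding convolution_def supp_fun_upd_zero sum.distrib
    by (intro arg_cong2[where f = "(+)"] sum.cong) auto
  also have "(\<Sum>u\<in>supp F. if u + v = m then F u * G v else 0) =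
      G v * (\<Sum>u\<in>supp F. if u + v = m then F u else 0)"
    by (subst sum_distrib_left) (rule sum.cong; simp add: mult.commute)
  finally show ?thesis
    by (simp only: add.commute)
qed

lemma convolution_unique_sum:
  assumes "u \<in> supp F" "v \<in> supp G" "finite (supp F)" "finite (supp G)"
    and unique: "\<forall>u'\<in>supp F. \<forall>v'\<in>supp G. u' + v' = u + v \<longrightarrow> u' = u \<and> v' = v"
  shows "convolution F G (u + v) = F u * G v"
proof -
  have "convolution F G (u + v) =
      (\<Sum>u'\<in>supp F. \<Sum>v'\<in>supp G. if u' = u \<and> v' = v then F u' * G v' else 0)"
    unfolding convolution_def using unique by (intro sum.cong refl) auto
  also have "\<dots> = (\<Sum>u'\<in>supp F. if u' = u then F u * G v else 0)"
    using assms by (intro sum.cong refl) (auto simp: sum.delta' if_distrib cong: if_cong)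
  also have "\<dots> = F u * G v"
    using assms by (simp add: sum.delta')
  finally show ?thesis .
qed

context subring
begin

lemma rsubmodule_rcontent [simp]: "rsubmodule R (rcontent R F)"
  unfolding rcontent_def by simp

lemma rcontent_mem: "F x \<in> rcontent R F"
  unfolding rcontent_def by (rule rspan_base) simp

lemma rcontent_eq_zero: "supp F = {} \<Longrightarrow> rcontent R F = {0}"
  unfolding rcontent_def supp_def
  by (simp add: image_constant_conv rspan_eq[OF rsubmodule_singleton_zero])

lemma rcontent_fun_upd_zero_subset: "rcontent R (F(u := 0)) \<subseteq> rcontent R F"
  unfolding rcontent_def[of R "F(u := 0)"]
  by (rule rspan_minimal) (auto simp: rcontent_mem rsubmodule_zero)

lemma rcontent_subset_fun_upd_zero: "rcontent R F \<subseteq> msum (rcontent R (F(u := 0))) (rspan R {F u})"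
  unfolding rcontent_def[of R F]
proof (rule rspan_minimal[OF rsubmodule_msum], safe)
  fix x
  show "F x \<in> msum (rcontent R (F(u := 0))) (rspan R {F u})"
  proof (cases "x = u")
    case True
    then show ?thesis
      using subsetD[OF msum_upper2 rspan_base[of "F u" "{F u}"]] by simp
  next
    case False
    then show ?thesis
      using subsetD[OF msum_upper1 rcontent_mem[of "F(u := 0)" x]] by simp
  qed
qed

lemma rcontent_convolution_fun_upd_left:
  assumes "u \<in> supp F" "finite (supp F)" "finite (supp G)"
  shows "rcontent R (convolution (F(u := 0)) G) \<subseteq>
    msum (rcontent R (convolution F G)) (mmul R (rspan R {F u}) (rcontent R G))"
  unfolding rcontent_def[of R "convolution (F(u := 0)) G"]
proof (rule rspan_minimal[OF rsubmodule_msum], safe)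
  fix m
  let ?s = "\<Sum>v\<in>supp G. if u + v = m then G v else 0"
  have "?s \<in> rcontent R G"
    using assms by (intro rsubmodule_sum) (auto simp: rcontent_mem rsubmodule_zero)
  then have "F u * ?s \<in> mmul R (rspan R {F u}) (rcontent R G)"
    by (intro mmul_mem rspan_base) simp_all
  then have "convolution F G m - F u * ?s \<in>
      msum (rcontent R (convolution F G)) (mmul R (rspan R {F u}) (rcontent R G))"
    by (rule rsubmodule_diff[OF rsubmodule_msum subsetD[OF msum_upper1 rcontent_mem] subsetD[OF msum_upper2]])
  then show "convolution (F(u := 0)) G m \<in>
      msum (rcontent R (convolution F G)) (mmul R (rspan R {F u}) (rcontent R G))"
    using convolution_fun_upd_left[OF assms(1,2), of G m] by simp
qed

lemma rcontent_convolution_fun_upd_right: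
  assumes "v \<in> supp G" "finite (supp F)" "finite (supp G)"
  shows "rcontent R (convolution F (G(v := 0))) \<subseteq>
    msum (rcontent R (convolution F G)) (mmul R (rspan R {G v}) (rcontent R F))"
  unfolding rcontent_def[of R "convolution F (G(v := 0))"]
proof (rule rspan_minimal[OF rsubmodule_msum], safe)
  fix m
  let ?s = "\<Sum>u\<in>supp F. if u + v = m then F u else 0"
  have "?s \<in> rcontent R F"
    using assms by (intro rsubmodule_sum) (auto simp: rcontent_mem rsubmodule_zero)
  then have "G v * ?s \<in> mmul R (rspan R {G v}) (rcontent R F)"
    by (intro mmul_mem rspan_base) simp_all
  then have "convolution F G m - G v * ?s \<in>
      msum (rcontent R (convolution F G)) (mmul R (rspan R {G v}) (rcontent R F))"
    by (rule rsubmodule_diff[OF rsubmodule_msum subsetD[OF msum_upper1 rcontent_mem] subsetD[OF msum_upper2]])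
  then show "convolution F (G(v := 0)) m \<in>
      msum (rcontent R (convolution F G)) (mmul R (rspan R {G v}) (rcontent R F))"
    using convolution_fun_upd_right[OF assms(1,3), of F m] by simp
qed

lemma rcontent_convolution_subset:
  assumes "finite (supp F)" "finite (supp G)"
  shows "rcontent R (convolution F G) \<subseteq> mmul R (rcontent R F) (rcontent R G)"
  unfolding rcontent_def[of R "convolution F G"]
proof (rule rspan_minimal[OF rsubmodule_mmul], safe)
  fix m
  show "convolution F G m \<in> mmul R (rcontent R F) (rcontent R G)"
    unfolding convolution_def using assms
    by (intro rsubmodule_sum[OF rsubmodule_mmul])
      (auto simp: rcontent_mem mmul_mem rsubmodule_zero[OF rsubmodule_mmul])
qed

lemma mpow_Suc_subset_msum:
  assumes mod: "rsubmodule R A" "rsubmodule R A'"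
    and A: "A' \<subseteq> A" "a \<in> A" and split: "A \<subseteq> msum A' (rspan R {a})"
  shows "mpow R A (Suc k) \<subseteq> msum (mpow R A' (Suc k)) (mmul R (rspan R {a}) (mpow R A k))"
proof (induction k)
  case 0
  then show ?case
    using split mod by (simp add: mpow_0 mpow_Suc mmul_commute[of _ R] mmul_R_left)
next
  case (Suc k)
  let ?a = "rspan R {a}"
  have "mpow R A (Suc (Suc k)) \<subseteq> mmul R A (msum (mpow R A' (Suc k)) (mmul R ?a (mpow R A k)))"
    unfolding mpow_Suc[of _ "Suc k"] by (rule mmul_mono[OF order_refl Suc.IH])
  also have "\<dots> \<subseteq> msum (mmul R A (mpow R A' (Suc k))) (mmul R A (mmul R ?a (mpow R A k)))"
    by (rule mmul_msum_distrib_left)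
  also have "\<dots> \<subseteq> msum (mpow R A' (Suc (Suc k))) (mmul R ?a (mpow R A (Suc k)))"
  proof (rule msum_least[OF rsubmodule_msum])
    have "mmul R A (mpow R A' (Suc k)) \<subseteq> mmul R (msum A' ?a) (mpow R A' (Suc k))"
      by (rule mmul_mono[OF split order_refl])
    also have "\<dots> \<subseteq> msum (mmul R A' (mpow R A' (Suc k))) (mmul R ?a (mpow R A' (Suc k)))"
      by (rule mmul_msum_distrib_right)
    also have "\<dots> \<subseteq> msum (mpow R A' (Suc (Suc k))) (mmul R ?a (mpow R A (Suc k)))"
      by (intro msum_mono mmul_mono mpow_mono A order_refl) (simp add: mpow_Suc)
    finally show "mmul R A (mpow R A' (Suc k)) \<subseteq> \<dots>" .
    have "mmul R A (mmul R ?a (mpow R A k)) = mmul R ?a (mpow R A (Suc k))"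
      using mod by (simp add: mpow_Suc mmul_left_commute)
    then show "mmul R A (mmul R ?a (mpow R A k)) \<subseteq> msum (mpow R A' (Suc (Suc k))) (mmul R ?a (mpow R A (Suc k)))"
      by (simp add: msum_upper2)
  qed
  finally show ?case .
qed

text \<open>
  The two halves of the inductive step of Northcott's argument, stated for arbitrary modules:
  \<open>A = A' + Ra\<close> and \<open>B = B' + Rb\<close>, where \<open>ab\<close> lies in \<open>C = c(FG)\<close>, and \<open>C\<^sub>1\<close>, \<open>C\<^sub>2\<close> play the role
  of the contents of the products with \<open>a\<close> resp. \<open>b\<close> removed.
\<close>

lemma dedekind_mertens_lead_bound:
  assumes mod: "rsubmodule R A" "rsubmodule R B'" "rsubmodule R C"
    and "a \<in> A" "B \<subseteq> msum B' (rspan R {b})" "a * b \<in> C"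
    and C2: "C\<^sub>2 \<subseteq> msum C (mmul R (rspan R {b}) A)"
    and B'_zero: "t = 0 \<Longrightarrow> B' = {0}"
    and IH: "\<And>t'. t = Suc t' \<Longrightarrow> mmul R (mpow R A t) B' \<subseteq> mmul R (mpow R A t') C\<^sub>2"
  shows "mmul R (mmul R (rspan R {a}) (mpow R A t)) B \<subseteq> mmul R (mpow R A t) C"
proof -
  let ?a = "rspan R {a}" and ?b = "rspan R {b}" and ?P = "mpow R A t"
  have ab: "mmul R ?a ?b \<subseteq> C"
    by (rule mmul_rspan_minimal) (use mod \<open>a * b \<in> C\<close> in auto)
  have aA: "?a \<subseteq> A"
    using \<open>a \<in> A\<close> mod by (simp add: rspan_minimal)
  have "mmul R (mmul R ?a ?P) B \<subseteq> msum (mmul R (mmul R ?a ?P) B') (mmul R (mmul R ?a ?P) ?b)"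
    using mmul_mono[OF order_refl \<open>B \<subseteq> _\<close>] mmul_msum_distrib_left by (rule order_trans)
  also have "\<dots> \<subseteq> mmul R ?P C"
  proof (rule msum_least[OF rsubmodule_mmul])
    have "mmul R (mmul R ?a ?P) ?b = mmul R ?P (mmul R ?a ?b)"
      by (simp add: mmul_ac)
    then show "mmul R (mmul R ?a ?P) ?b \<subseteq> mmul R ?P C"
      using mmul_mono[OF order_refl ab] by simp
    show "mmul R (mmul R ?a ?P) B' \<subseteq> mmul R ?P C"
    proof (cases t)
      case 0
      then show ?thesis
        using B'_zero by (simp add: mmul_zero_right rsubmodule_zero)
    next
      case (Suc t')
      let ?P' = "mpow R A t'"
      have P_B': "mmul R ?P B' \<subseteq> msum (mmul R ?P' C) (mmul R ?P' (mmul R ?b A))"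
        using order_trans[OF IH[OF Suc] order_trans[OF mmul_mono[OF order_refl C2] mmul_msum_distrib_left]] .
      have "mmul R (mmul R ?a ?P) B' = mmul R ?a (mmul R ?P B')"
        using mod by (simp add: mmul_ac)
      also have "\<dots> \<subseteq> mmul R ?a (msum (mmul R ?P' C) (mmul R ?P' (mmul R ?b A)))"
        by (rule mmul_mono[OF order_refl P_B'])
      also have "\<dots> \<subseteq> msum (mmul R ?a (mmul R ?P' C)) (mmul R ?a (mmul R ?P' (mmul R ?b A)))"
        by (rule mmul_msum_distrib_left)
      also have "\<dots> = msum (mmul R (mmul R ?a ?P') C) (mmul R (mmul R ?a ?b) (mmul R A ?P'))"
        using mod by (simp add: mmul_ac)
      also have "\<dots> \<subseteq> mmul R ?P C"
      proof (rule msum_least[OF rsubmodule_mmul])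
        show "mmul R (mmul R ?a ?P') C \<subseteq> mmul R ?P C"
          using mmul_mono[OF mmul_mono[OF aA order_refl] order_refl] by (simp add: Suc mpow_Suc)
        show "mmul R (mmul R ?a ?b) (mmul R A ?P') \<subseteq> mmul R ?P C"
          using mmul_mono[OF ab order_refl] by (simp add: Suc mpow_Suc mmul_commute[of _ C])
      qed
      finally show ?thesis .
    qed
  qed
  finally show ?thesis .
qed

lemma dedekind_mertens_step:
  assumes mod: "rsubmodule R A" "rsubmodule R A'" "rsubmodule R B"
    and A: "A' \<subseteq> A" "a \<in> A" "A \<subseteq> msum A' (rspan R {a})"
    and C1: "C\<^sub>1 \<subseteq> msum C (mmul R (rspan R {a}) B)"
    and IH: "mmul R (mpow R A' (Suc t)) B \<subseteq> mmul R (mpow R A' t) C\<^sub>1"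
    and lead: "mmul R (mmul R (rspan R {a}) (mpow R A t)) B \<subseteq> mmul R (mpow R A t) C"
  shows "mmul R (mpow R A (Suc t)) B \<subseteq> mmul R (mpow R A t) C"
proof -
  let ?a = "rspan R {a}" and ?P = "mpow R A t"
  have "mmul R (mpow R A (Suc t)) B \<subseteq> msum (mmul R (mpow R A' (Suc t)) B) (mmul R (mmul R ?a ?P) B)"
    using mmul_mono[OF mpow_Suc_subset_msum[OF mod(1,2) A] order_refl] mmul_msum_distrib_right
    by (rule order_trans)
  also have "\<dots> \<subseteq> mmul R ?P C"
  proof (rule msum_least[OF rsubmodule_mmul _ lead])
    have "mmul R (mpow R A' (Suc t)) B \<subseteq> mmul R ?P (msum C (mmul R ?a B))"
      using IH mmul_mono[OF mpow_mono[OF A(1)] C1] by (rule order_trans)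
    also have "\<dots> \<subseteq> msum (mmul R ?P C) (mmul R ?P (mmul R ?a B))"
      by (rule mmul_msum_distrib_left)
    also have "\<dots> = msum (mmul R ?P C) (mmul R (mmul R ?a ?P) B)"
      using mod by (simp add: mmul_ac)
    also have "\<dots> \<subseteq> mmul R ?P C"
      using lead by (simp add: msum_least)
    finally show "mmul R (mpow R A' (Suc t)) B \<subseteq> mmul R ?P C" .
  qed
  finally show ?thesis .
qed

theorem dedekind_mertens:
  assumes "unique_product D"
    and "finite (supp F)" "finite (supp G)" "supp F \<subseteq> D" "supp G \<subseteq> D" "supp G \<noteq> {}"
  shows "mmul R (mpow R (rcontent R F) (card (supp G))) (rcontent R G)
      \<subseteq> mmul R (mpow R (rcontent R F) (card (supp G) - 1)) (rcontent R (convolution F G))"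
  using assms(2-)
proof (induction "card (supp F) + card (supp G)" arbitrary: F G rule: less_induct)
  case less
  obtain t where t: "card (supp G) = Suc t"
    using less.prems by (metis card_gt_0_iff gr0_implies_Suc)
  show ?case
  proof (cases "supp F = {}")
    case True
    then show ?thesis
      by (simp add: t mpow_Suc rcontent_eq_zero mmul_zero_left rsubmodule_zero)
  next
    case False
    from assms(1)[unfolded unique_product_def, rule_format, of "supp F" "supp G"] less.prems False
    obtain u v where uv: "u \<in> supp F" "v \<in> supp G"
      and unique: "\<forall>u'\<in>supp F. \<forall>v'\<in>supp G. u' + v' = u + v \<longrightarrow> u' = u \<and> v' = v"
      by blast
    let ?F' = "F(u := 0)" and ?G' = "G(v := 0)"
    have supp': "supp ?F' = supp F - {u}" "supp ?G' = supp G - {v}"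
      by (simp_all add: supp_fun_upd_zero)
    have smaller: "card (supp ?F') < card (supp F)" "card (supp ?G') < card (supp G)"
      using card_Diff1_less[OF less.prems(1) uv(1)] card_Diff1_less[OF less.prems(2) uv(2)]
      by (simp_all only: supp')
    have IH1: "mmul R (mpow R (rcontent R ?F') (Suc t)) (rcontent R G)
        \<subseteq> mmul R (mpow R (rcontent R ?F') t) (rcontent R (convolution ?F' G))"
      using less.hyps[of ?F' G] smaller(1) less.prems
      by (simp add: supp' t order_trans[OF Diff_subset less.prems(3)])
    have IH2: "mmul R (mpow R (rcontent R F) t) (rcontent R ?G')
        \<subseteq> mmul R (mpow R (rcontent R F) t') (rcontent R (convolution F ?G'))" if "t = Suc t'" for t'
    proof -
      have card: "card (supp ?G') = t"
        using uv(2) less.prems(2) by (simp add: supp' t)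
      then have "supp ?G' \<noteq> {}"
        using that by auto
      then show ?thesis
        using less.hyps[of F ?G'] smaller(2) less.prems card that
        by (simp add: supp' order_trans[OF Diff_subset less.prems(4)])
    qed
    have B'_zero: "rcontent R ?G' = {0}" if "t = 0"
    proof -
      have "card (supp ?G') = 0"
        using uv(2) less.prems(2) that by (simp add: supp' t)
      then show ?thesis
        using less.prems(2) by (simp add: supp' rcontent_eq_zero)
    qed
    have ab: "F u * G v \<in> rcontent R (convolution F G)"
      using convolution_unique_sum[OF uv less.prems(1,2) unique] rcontent_mem by metis
    have lead: "mmul R (mmul R (rspan R {F u}) (mpow R (rcontent R F) t)) (rcontent R G)
        \<subseteq> mmul R (mpow R (rcontent R F) t) (rcontent R (convolution F G))"
      by (rule dedekind_mertens_lead_bound[OF _ _ _ rcontent_mem rcontent_subset_fun_upd_zero ab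
            rcontent_convolution_fun_upd_right[OF uv(2) less.prems(1,2)] B'_zero IH2]) simp_all
    show ?thesis
      unfolding t diff_Suc_1
      by (rule dedekind_mertens_step[OF _ _ _ rcontent_fun_upd_zero_subset rcontent_mem
            rcontent_subset_fun_upd_zero rcontent_convolution_fun_upd_left[OF uv(1) less.prems(1,2)]
            IH1 lead]) simp_all
  qed
qed

end

section \<open>Torsion-free groups have unique products\<close>

lemma nsmul_0 [simp]: "nsmul 0 x = 0"
  by (simp add: nsmul_def)

lemma nsmul_Suc [simp]: "nsmul (Suc n) x = x + nsmul n x"
  by (simp add: nsmul_def)

lemma nsmul_zero [simp]: "nsmul n 0 = 0"
  by (induction n) simp_all

lemma nsmul_uminus: "nsmul n (- x) = - nsmul n x"
  by (induction n) simp_all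

lemma nsmul_add: "nsmul (m + n) x = nsmul m x + nsmul n x"
  by (induction m) (simp_all add: add.assoc)

lemma nsmul_mult: "nsmul (m * n) x = nsmul m (nsmul n x)"
  by (induction m) (simp_all add: nsmul_add)

locale torsion_free_subgroup =
  fixes Q :: "'g::ab_group_add set"
  assumes zero_mem: "0 \<in> Q" and add_mem: "x \<in> Q \<Longrightarrow> y \<in> Q \<Longrightarrow> x + y \<in> Q"
    and uminus_mem: "x \<in> Q \<Longrightarrow> - x \<in> Q"
    and torsion_free: "x \<in> Q \<Longrightarrow> n > 0 \<Longrightarrow> nsmul n x = 0 \<Longrightarrow> x = 0"
begin

text \<open>A strict cone is the set of positive elements of a partial order on \<open>Q\<close> compatible with addition.\<close>

definition strict_cone :: "'g set \<Rightarrow> bool"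
  where "strict_cone P \<longleftrightarrow> P \<subseteq> Q \<and> (\<forall>x\<in>P. \<forall>y\<in>P. x + y \<in> P) \<and> 0 \<notin> P"

definition maximal_cone :: "'g set \<Rightarrow> bool"
  where "maximal_cone M \<longleftrightarrow> strict_cone M \<and> (\<forall>P. strict_cone P \<and> M \<subseteq> P \<longrightarrow> P = M)"

definition cone_extend :: "'g set \<Rightarrow> 'g \<Rightarrow> 'g set"
  where "cone_extend P x = P \<union> {nsmul k x + p | k p. k > 0 \<and> (p \<in> P \<or> p = 0)}"

lemma nsmul_mem: "x \<in> Q \<Longrightarrow> nsmul n x \<in> Q"
  by (induction n) (auto intro: zero_mem add_mem)

lemma strict_cone_nsmul: "strict_cone P \<Longrightarrow> x \<in> P \<Longrightarrow> nsmul (Suc n) x \<in> P"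
  by (induction n) (auto simp: strict_cone_def)

lemma cone_extend_base: "x \<in> cone_extend P x"
  unfolding cone_extend_def by (intro UnI2 CollectI exI[of _ 1] exI[of _ 0]) simp

lemma cone_extend_superset: "P \<subseteq> cone_extend P x"
  unfolding cone_extend_def by auto

lemma strict_cone_extend:
  assumes P: "strict_cone P" and x: "x \<in> Q"
    and nonzero: "\<And>k p. k > 0 \<Longrightarrow> p \<in> P \<or> p = 0 \<Longrightarrow> nsmul k x + p \<noteq> 0"
  shows "strict_cone (cone_extend P x)"
  unfolding strict_cone_def
proof (intro conjI ballI)
  show "cone_extend P x \<subseteq> Q"
    using P x unfolding cone_extend_def strict_cone_def by (auto intro!: add_mem nsmul_mem zero_mem)
  show "0 \<notin> cone_extend P x"
    using P nonzero unfolding cone_extend_def strict_cone_def by auto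
next
  fix y w assume y: "y \<in> cone_extend P x" and w: "w \<in> cone_extend P x"
  have closed: "a \<in> P \<Longrightarrow> b \<in> P \<Longrightarrow> a + b \<in> P" for a b
    using P by (simp add: strict_cone_def)
  have sum: "nsmul k x + p \<in> cone_extend P x" if "k > 0" "p \<in> P \<or> p = 0" for k p
    using that unfolding cone_extend_def by blast
  show "y + w \<in> cone_extend P x"
  proof (cases "y \<in> P")
    case yP: True
    show ?thesis
    proof (cases "w \<in> P")
      case True
      then show ?thesis
        using yP closed by (simp add: cone_extend_def)
    next
      case False
      then obtain k p where "w = nsmul k x + p" "k > 0" "p \<in> P \<or> p = 0"
        using w by (auto simp: cone_extend_def)
      then show ?thesis
        using sum[of k "y + p"] yP closed by (auto simp: algebra_simps)
    qed
  next
    case False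
    then obtain k p where kp: "y = nsmul k x + p" "k > 0" "p \<in> P \<or> p = 0"
      using y by (auto simp: cone_extend_def)
    show ?thesis
    proof (cases "w \<in> P")
      case True
      then show ?thesis
        using kp sum[of k "p + w"] closed by (auto simp: algebra_simps)
    next
      case False
      then obtain k' p' where "w = nsmul k' x + p'" "k' > 0" "p' \<in> P \<or> p' = 0"
        using w by (auto simp: cone_extend_def)
      then show ?thesis
        using kp sum[of "k + k'" "p + p'"] closed by (auto simp: algebra_simps nsmul_add)
    qed
  qed
qed

lemma maximal_cone_cone_extend:
  assumes "maximal_cone M" "x \<in> Q" "x \<notin> M"
  obtains k p where "k > 0" "p \<in> M \<or> p = 0" "nsmul k x + p = 0"
proof -
  have "\<not> strict_cone (cone_extend M x)"
    using assms cone_extend_superset cone_extend_base unfolding maximal_cone_def by blast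
  then show ?thesis
    using strict_cone_extend assms that unfolding maximal_cone_def by blast
qed

lemma maximal_cone_nsmul_root:
  assumes M: "maximal_cone M" and x: "x \<in> Q" and n: "n > 0" and nx: "nsmul n x \<in> M"
  shows "x \<in> M"
proof (rule ccontr)
  assume "x \<notin> M"
  with M x obtain k p where k: "k > 0" and p: "p \<in> M \<or> p = 0" and e: "nsmul k x + p = 0"
    by (rule maximal_cone_cone_extend)
  have cone: "strict_cone M"
    using M by (simp add: maximal_cone_def)
  show False
  proof (cases "p = 0")
    case True
    then have "x = 0"
      using e torsion_free[OF x k] by simp
    then show False
      using nx cone by (simp add: strict_cone_def)
  next
    case False
    then have "p \<in> M"
      using p by simp
    have "p = nsmul k (- x)"
      using e by (simp add: nsmul_uminus eq_neg_iff_add_eq_0 add.commute)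
    obtain n' k' where "n = Suc n'" "k = Suc k'"
      using n k gr0_implies_Suc by blast
    then have "nsmul n p \<in> M" "nsmul k (nsmul n x) \<in> M"
      using strict_cone_nsmul[OF cone \<open>p \<in> M\<close>] strict_cone_nsmul[OF cone nx] by simp_all
    moreover have "nsmul n p + nsmul k (nsmul n x) = 0"
      unfolding \<open>p = _\<close> nsmul_mult[symmetric] nsmul_uminus by (simp add: mult.commute)
    ultimately show False
      using cone unfolding strict_cone_def by metis
  qed
qed

lemma maximal_cone_total:
  assumes M: "maximal_cone M" and x: "x \<in> Q" "x \<noteq> 0"
  shows "x \<in> M \<or> - x \<in> M"
proof (rule ccontr)
  assume not_M: "\<not> (x \<in> M \<or> - x \<in> M)"
  with M x obtain k p where k: "k > 0" and p: "p \<in> M \<or> p = 0" and e: "nsmul k x + p = 0"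
    by (metis maximal_cone_cone_extend)
  then have "p \<noteq> 0"
    using torsion_free[OF x(1) k] x(2) by auto
  moreover have "p = nsmul k (- x)"
    using e by (simp add: nsmul_uminus eq_neg_iff_add_eq_0 add.commute)
  ultimately have "- x \<in> M"
    using p maximal_cone_nsmul_root[OF M uminus_mem[OF x(1)] k] by simp
  with not_M show False
    by simp
qed

lemma exists_maximal_cone: "\<exists>M. maximal_cone M"
proof -
  have "\<forall>C\<in>chains {P. strict_cone P}. \<Union>C \<in> {P. strict_cone P}"
  proof
    fix C assume "C \<in> chains {P. strict_cone P}"
    then have cone: "\<And>P. P \<in> C \<Longrightarrow> strict_cone P" and chain: "chain\<^sub>\<subseteq> C"
      by (auto simp: chains_def)
    have "x + y \<in> \<Union>C" if xy: "x \<in> \<Union>C" "y \<in> \<Union>C" for x y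
    proof -
      obtain P1 P2 where P: "x \<in> P1" "P1 \<in> C" "y \<in> P2" "P2 \<in> C"
        using xy by blast
      with chain have "P1 \<subseteq> P2 \<or> P2 \<subseteq> P1"
        by (auto simp: chain_subset_def)
      then show ?thesis
        using cone[OF \<open>P1 \<in> C\<close>] cone[OF \<open>P2 \<in> C\<close>] P unfolding strict_cone_def by blast
    qed
    moreover have "\<Union>C \<subseteq> Q" "0 \<notin> \<Union>C"
      using cone by (auto simp: strict_cone_def)
    ultimately show "\<Union>C \<in> {P. strict_cone P}"
      by (simp add: strict_cone_def)
  qed
  from Zorn_Lemma[OF this] show ?thesis
    by (auto simp: maximal_cone_def)
qed

lemma maximal_cone_finite_max:
  assumes M: "maximal_cone M" and "finite S" "S \<noteq> {}" "S \<subseteq> Q"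
  shows "\<exists>m\<in>S. \<forall>s\<in>S. s = m \<or> m - s \<in> M"
  using assms(2-)
proof (induction S rule: finite_ne_induct)
  case (singleton x)
  then show ?case by simp
next
  case (insert x F)
  then obtain m where m: "m \<in> F" "\<forall>s\<in>F. s = m \<or> m - s \<in> M"
    by auto
  have "x - m \<in> Q"
    using insert m add_mem[of x "- m"] uminus_mem by auto
  show ?case
  proof (cases "x - m \<in> M")
    case True
    have "s = x \<or> x - s \<in> M" if "s \<in> insert x F" for s
    proof -
      consider "s = x" | "s = m" | "m - s \<in> M"
        using m \<open>s \<in> insert x F\<close> by auto
      then show ?thesis
      proof cases
        case 3
        then have "(x - m) + (m - s) \<in> M"
          using M True unfolding maximal_cone_def strict_cone_def by blast
        then show ?thesis by simp
      qed (use True in auto)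
    qed
    then show ?thesis by auto
  next
    case False
    then have "x = m \<or> m - x \<in> M"
      using maximal_cone_total[OF M \<open>x - m \<in> Q\<close>] by (metis minus_diff_eq eq_iff_diff_eq_0)
    then show ?thesis
      using m by auto
  qed
qed

text \<open>Lexicographic maxima: first by coefficient index, then by degree.\<close>

theorem unique_product_nat_times: "unique_product (UNIV \<times> Q :: (nat \<times> 'g) set)"
  unfolding unique_product_def
proof (intro allI impI)
  obtain M where M: "maximal_cone M"
    using exists_maximal_cone by blast
  fix S T :: "(nat \<times> 'g) set"
  assume ST: "finite S \<and> finite T \<and> S \<noteq> {} \<and> T \<noteq> {} \<and> S \<subseteq> UNIV \<times> Q \<and> T \<subseteq> UNIV \<times> Q"
  have lex_max: "\<exists>i0 g0. (i0, g0) \<in> X \<and> (\<forall>(i, g)\<in>X. i \<le> i0 \<and> (i = i0 \<longrightarrow> g = g0 \<or> g0 - g \<in> M))"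
    if X: "finite X" "X \<noteq> {}" "X \<subseteq> UNIV \<times> Q" for X :: "(nat \<times> 'g) set"
  proof -
    define i0 where "i0 = Max (fst ` X)"
    have i0: "i0 \<in> fst ` X" "\<And>i g. (i, g) \<in> X \<Longrightarrow> i \<le> i0"
      using X unfolding i0_def by (simp, metis Max_ge finite_imageI fst_conv image_eqI)
    have "{g. (i0, g) \<in> X} = snd ` (X \<inter> {p. fst p = i0})"
      by force
    then have "finite {g. (i0, g) \<in> X}" "{g. (i0, g) \<in> X} \<noteq> {}" "{g. (i0, g) \<in> X} \<subseteq> Q"
      using X i0 by force+
    from maximal_cone_finite_max[OF M this]
    obtain g0 where "(i0, g0) \<in> X" "\<forall>g. (i0, g) \<in> X \<longrightarrow> g = g0 \<or> g0 - g \<in> M"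
      by blast
    then show ?thesis
      using i0 by blast
  qed
  obtain i0 g0 where u: "(i0, g0) \<in> S" "\<forall>(i, g)\<in>S. i \<le> i0 \<and> (i = i0 \<longrightarrow> g = g0 \<or> g0 - g \<in> M)"
    using lex_max ST by meson
  obtain j0 h0 where v: "(j0, h0) \<in> T" "\<forall>(j, h)\<in>T. j \<le> j0 \<and> (j = j0 \<longrightarrow> h = h0 \<or> h0 - h \<in> M)"
    using lex_max ST by meson
  show "\<exists>u\<in>S. \<exists>v\<in>T. \<forall>u'\<in>S. \<forall>v'\<in>T. u' + v' = u + v \<longrightarrow> u' = u \<and> v' = v"
  proof (intro bexI ballI impI)
    fix u' v' assume "u' \<in> S" "v' \<in> T" and e: "u' + v' = (i0, g0) + (j0, h0)"
    then obtain i g j h where uv': "u' = (i, g)" "v' = (j, h)" "(i, g) \<in> S" "(j, h) \<in> T"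
      by (cases u', cases v') auto
    have "i + j = i0 + j0" "g + h = g0 + h0"
      using e uv' by simp_all
    moreover have "i \<le> i0" "j \<le> j0"
      using u(2) v(2) uv' by auto
    ultimately have "i = i0" "j = j0"
      by auto
    then have "g = g0 \<or> g0 - g \<in> M" "h = h0 \<or> h0 - h \<in> M"
      using u(2) v(2) uv' by auto
    moreover have "(g0 - g) + (h0 - h) = 0"
      using \<open>g + h = g0 + h0\<close> by (simp add: algebra_simps)
    moreover have "\<forall>x\<in>M. \<forall>y\<in>M. x + y \<in> M" "0 \<notin> M"
      using M by (simp_all add: maximal_cone_def strict_cone_def)
    ultimately have "g = g0 \<and> h = h0"
      by (metis add.left_neutral add.right_neutral eq_iff_diff_eq_0)
    then show "u' = (i0, g0) \<and> v' = (j0, h0)"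
      using uv' \<open>i = i0\<close> \<open>j = j0\<close> by simp
  qed (use u v in auto)
qed

end

section \<open>Homogeneous components in a graded domain\<close>

locale graded =
  fixes \<Gamma> :: "'g::ab_group_add set" and Rg :: "'g \<Rightarrow> 'k::field set" and R :: "'k set"
  assumes graded: "graded_domain \<Gamma> Rg R"
begin

sublocale subring R
  using graded unfolding graded_domain_def quotient_field_of_def by unfold_locales blast

lemma hom_zero: "0 \<in> Rg a" and hom_add: "x \<in> Rg a \<Longrightarrow> y \<in> Rg a \<Longrightarrow> x + y \<in> Rg a"
  and hom_uminus: "x \<in> Rg a \<Longrightarrow> - x \<in> Rg a"
  and hom_trivial: "a \<notin> \<Gamma> \<Longrightarrow> Rg a = {0}"
  and hom_mult: "x \<in> Rg a \<Longrightarrow> y \<in> Rg b \<Longrightarrow> x * y \<in> Rg (a + b)"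
  and R_eq_sums: "R = {sum w S | w S. finite S \<and> (\<forall>\<alpha>\<in>S. w \<alpha> \<in> Rg \<alpha>)}"
  and hom_sum_eq_zero: "finite S \<Longrightarrow> (\<forall>\<alpha>\<in>S. w \<alpha> \<in> Rg \<alpha>) \<Longrightarrow> sum w S = 0 \<Longrightarrow> \<alpha> \<in> S \<Longrightarrow> w \<alpha> = 0"
  and Gamma_zero: "0 \<in> \<Gamma>" and Gamma_add: "a \<in> \<Gamma> \<Longrightarrow> b \<in> \<Gamma> \<Longrightarrow> a + b \<in> \<Gamma>"
  and torsion_free_quot_group: "torsion_free_set (quot_group \<Gamma>)"
proof -
  note g = graded[unfolded graded_domain_def submonoid_add_def]
  show "0 \<in> Rg a" using g by simp
  show "x \<in> Rg a \<Longrightarrow> y \<in> Rg a \<Longrightarrow> x + y \<in> Rg a" using g by simp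
  show "x \<in> Rg a \<Longrightarrow> - x \<in> Rg a" using g by simp
  show "a \<notin> \<Gamma> \<Longrightarrow> Rg a = {0}" using g by simp
  show "x \<in> Rg a \<Longrightarrow> y \<in> Rg b \<Longrightarrow> x * y \<in> Rg (a + b)" using g by simp
  show "R = {sum w S | w S. finite S \<and> (\<forall>\<alpha>\<in>S. w \<alpha> \<in> Rg \<alpha>)}" using g by (elim conjE)
  show "finite S \<Longrightarrow> (\<forall>\<alpha>\<in>S. w \<alpha> \<in> Rg \<alpha>) \<Longrightarrow> sum w S = 0 \<Longrightarrow> \<alpha> \<in> S \<Longrightarrow> w \<alpha> = 0"
    using g by blast
  show "0 \<in> \<Gamma>" using g by simp
  show "a \<in> \<Gamma> \<Longrightarrow> b \<in> \<Gamma> \<Longrightarrow> a + b \<in> \<Gamma>" using g by simp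
  show "torsion_free_set (quot_group \<Gamma>)" using g by simp
qed

lemma hom_sum: "finite I \<Longrightarrow> (\<And>i. i \<in> I \<Longrightarrow> h i \<in> Rg a) \<Longrightarrow> sum h I \<in> Rg a"
  by (induction I rule: finite_induct) (auto intro: hom_zero hom_add)

lemma hom_sum_eq_zero_shift:
  assumes S: "finite S" and v: "\<And>a. a \<in> S \<Longrightarrow> v a \<in> Rg (c + a)" and s0: "sum v S = 0" and a: "a \<in> S"
  shows "v a = 0"
proof -
  define z where "z d = v (d - c)" for d
  have inj: "inj_on ((+) c) S" by (auto simp: inj_on_def)
  have "sum z ((+) c ` S) = sum (z \<circ> (+) c) S" by (rule sum.reindex[OF inj])
  also have "\<dots> = 0" using s0 by (simp add: z_def o_def)
  finally have "sum z ((+) c ` S) = 0" .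
  moreover have "\<forall>d\<in>(+) c ` S. z d \<in> Rg d" using v by (auto simp: z_def)
  ultimately have "z (c + a) = 0" using hom_sum_eq_zero[of "(+) c ` S" z "c + a"] S a by simp
  then show ?thesis by (simp add: z_def)
qed

text \<open>
  Write \<open>1 = \<Sum>\<^sub>\<alpha> e\<^sub>\<alpha>\<close> and pick \<open>h = e\<^sub>\<alpha>\<^sub>0 \<noteq> 0\<close>; comparing components of degree \<open>\<alpha>\<^sub>0 + \<alpha>\<close> in
  \<open>h = \<Sum>\<^sub>\<alpha> h e\<^sub>\<alpha>\<close> shows \<open>h e\<^sub>\<alpha> = 0\<close>, hence \<open>e\<^sub>\<alpha> = 0\<close>, for all \<open>\<alpha> \<noteq> 0\<close>.
\<close>

lemma one_hom_zero: "1 \<in> Rg 0"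
proof -
  have "1 \<in> R" by (rule one_mem)
  then obtain e S where S: "finite S" "\<forall>\<alpha>\<in>S. e \<alpha> \<in> Rg \<alpha>" and e1: "1 = sum e S"
    by (subst (asm) R_eq_sums) blast
  have "\<exists>a0\<in>S. e a0 \<noteq> 0"
  proof (rule ccontr)
    assume "\<not> (\<exists>a0\<in>S. e a0 \<noteq> 0)"
    then have "sum e S = 0" by (simp add: sum.neutral)
    then show False using e1 by simp
  qed
  then obtain a0 where a0: "a0 \<in> S" "e a0 \<noteq> 0" by blast
  define h where "h = e a0"
  define S' where "S' = insert 0 S"
  define v where "v a = (if a = 0 then h else 0) - (if a \<in> S then h * e a else 0)" for a
  have fS': "finite S'" using S by (simp add: S'_def)
  have vR: "v a \<in> Rg (a0 + a)" if "a \<in> S'" for a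
  proof -
    have "(if a = 0 then h else 0) \<in> Rg (a0 + a)" using S a0 by (auto simp: h_def hom_zero)
    moreover have "(if a \<in> S then h * e a else 0) \<in> Rg (a0 + a)"
      using S a0 by (auto simp: h_def hom_zero intro!: hom_mult)
    ultimately show ?thesis unfolding v_def diff_conv_add_uminus by (rule hom_add[OF _ hom_uminus])
  qed
  have "sum v S' = (\<Sum>a\<in>S'. if a = 0 then h else 0) - (\<Sum>a\<in>S'. if a \<in> S then h * e a else 0)"
    unfolding v_def by (simp add: sum_subtractf)
  also have "(\<Sum>a\<in>S'. if a = 0 then h else 0) = h" using fS' by (simp add: S'_def)
  also have "(\<Sum>a\<in>S'. if a \<in> S then h * e a else 0) = (\<Sum>a\<in>S. h * e a)"
    using fS' by (simp add: sum.inter_restrict[symmetric] S'_def Int_absorb1 subset_insertI)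
  also have "\<dots> = h" using e1 by (simp add: sum_distrib_left[symmetric])
  finally have "sum v S' = 0" by simp
  then have v0: "\<And>a. a \<in> S' \<Longrightarrow> v a = 0" using hom_sum_eq_zero_shift[OF fS' vR] by blast
  have "e a = 0" if "a \<in> S" "a \<noteq> 0" for a
    using v0[of a] that a0 by (simp add: v_def S'_def h_def)
  then have "\<forall>a\<in>S. e a \<in> Rg 0"
    using S by (metis hom_zero)
  then show ?thesis
    unfolding e1 using S by (intro hom_sum) auto
qed

lemma hom_prod: "finite I \<Longrightarrow> (\<And>i. i \<in> I \<Longrightarrow> f i \<in> Rg (g i)) \<Longrightarrow> prod f I \<in> Rg (sum g I)"
  by (induction I rule: finite_induct) (auto intro: hom_mult one_hom_zero)

lemma RH_deg_iff:
  "x \<in> RH_deg Rg d \<longleftrightarrow> (\<exists>b h a c. x = b / h \<and> b \<in> Rg a \<and> h \<in> Rg c \<and> h \<noteq> 0 \<and> d = a - c)"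
  unfolding RH_deg_def by blast

lemma RH_degE:
  assumes "x \<in> RH_deg Rg d"
  obtains b h a c where "x = b / h" "b \<in> Rg a" "h \<in> Rg c" "h \<noteq> 0" "d = a - c"
  using assms unfolding RH_deg_iff by blast

lemma RH_degI: "b \<in> Rg a \<Longrightarrow> h \<in> Rg c \<Longrightarrow> h \<noteq> 0 \<Longrightarrow> b / h \<in> RH_deg Rg (a - c)"
  unfolding RH_deg_iff by blast

lemma RH_deg_zero: "0 \<in> RH_deg Rg d"
  using RH_degI[OF hom_zero one_hom_zero, of d] by simp

lemma RH_deg_add:
  assumes "x \<in> RH_deg Rg d" "y \<in> RH_deg Rg d"
  shows "x + y \<in> RH_deg Rg d"
proof -
  obtain b h a c where x: "x = b / h" "b \<in> Rg a" "h \<in> Rg c" "h \<noteq> 0" "d = a - c"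
    using assms(1) by (rule RH_degE)
  obtain b' h' a' c' where y: "y = b' / h'" "b' \<in> Rg a'" "h' \<in> Rg c'" "h' \<noteq> 0" "d = a' - c'"
    using assms(2) by (rule RH_degE)
  have "a' + c = a + c'"
    using x(5) y(5) by (simp add: algebra_simps)
  then have "b' * h \<in> Rg (a + c')"
    using hom_mult[OF y(2) x(3)] by simp
  then have "b * h' + b' * h \<in> Rg (a + c')"
    by (rule hom_add[OF hom_mult[OF x(2) y(3)]])
  moreover have "h * h' \<in> Rg (c + c')" "h * h' \<noteq> 0"
    using x y by (simp_all add: hom_mult)
  moreover have "x + y = (b * h' + b' * h) / (h * h')"
    using x y by (simp add: field_simps)
  moreover have "d = (a + c') - (c + c')"
    unfolding x(5) by simp
  ultimately show ?thesis
    using RH_degI by metis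
qed

lemma RH_deg_uminus: "x \<in> RH_deg Rg d \<Longrightarrow> - x \<in> RH_deg Rg d"
  by (elim RH_degE) (metis RH_degI hom_uminus minus_divide_left)

lemma RH_deg_diff: "x \<in> RH_deg Rg d \<Longrightarrow> y \<in> RH_deg Rg d \<Longrightarrow> x - y \<in> RH_deg Rg d"
  unfolding diff_conv_add_uminus by (intro RH_deg_add RH_deg_uminus)

lemma RH_deg_mult:
  assumes "x \<in> RH_deg Rg d" "y \<in> RH_deg Rg e"
  shows "x * y \<in> RH_deg Rg (d + e)"
proof -
  obtain b h a c where x: "x = b / h" "b \<in> Rg a" "h \<in> Rg c" "h \<noteq> 0" "d = a - c"
    using assms(1) by (rule RH_degE)
  obtain b' h' a' c' where y: "y = b' / h'" "b' \<in> Rg a'" "h' \<in> Rg c'" "h' \<noteq> 0" "e = a' - c'"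
    using assms(2) by (rule RH_degE)
  have "(b * b') / (h * h') \<in> RH_deg Rg ((a + a') - (c + c'))"
    using x y by (intro RH_degI hom_mult) simp_all
  moreover have "x * y = (b * b') / (h * h')" "d + e = (a + a') - (c + c')"
    using x(1) y(1) unfolding x(5) y(5) by (simp_all add: algebra_simps)
  ultimately show ?thesis
    by simp
qed

lemma RH_deg_sum: "finite I \<Longrightarrow> (\<And>i. i \<in> I \<Longrightarrow> f i \<in> RH_deg Rg d) \<Longrightarrow> sum f I \<in> RH_deg Rg d"
  by (induction I rule: finite_induct) (auto intro: RH_deg_zero RH_deg_add)

lemma RH_deg_nonzero_degree:
  assumes "x \<in> RH_deg Rg d" "x \<noteq> 0"
  shows "d \<in> quot_group \<Gamma>"
proof -
  obtain b h a c where x: "x = b / h" "b \<in> Rg a" "h \<in> Rg c" "h \<noteq> 0" "d = a - c"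
    using assms(1) by (rule RH_degE)
  have "b \<noteq> 0"
    using x assms(2) by auto
  then have "a \<in> \<Gamma>" "c \<in> \<Gamma>"
    using x hom_trivial by fastforce+
  then show ?thesis
    using x unfolding quot_group_def by blast
qed

text \<open>Multiplying by the product of all denominators reduces this to the uniqueness of
  homogeneous decompositions in \<open>R\<close>.\<close>

lemma RH_deg_sum_eq_zero:
  assumes S: "finite S" and x: "\<And>g. g \<in> S \<Longrightarrow> x g \<in> RH_deg Rg g" and "sum x S = 0" "g \<in> S"
  shows "x g = 0"
proof -
  have "\<exists>h c. h \<in> Rg c \<and> h \<noteq> 0 \<and> x g * h \<in> Rg (g + c)" if g: "g \<in> S" for g
  proof -
    obtain b h a c where "x g = b / h" "b \<in> Rg a" "h \<in> Rg c" "h \<noteq> 0" "g = a - c"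
      using x[OF g] by (rule RH_degE)
    then show ?thesis
      by (intro exI[of _ h] exI[of _ c]) simp
  qed
  then obtain h c where h: "\<And>g. g \<in> S \<Longrightarrow> h g \<in> Rg (c g)" "\<And>g. g \<in> S \<Longrightarrow> h g \<noteq> 0"
    and xh: "\<And>g. g \<in> S \<Longrightarrow> x g * h g \<in> Rg (g + c g)"
    by metis
  define H where "H = prod h S"
  have "H \<noteq> 0"
    using S h by (simp add: H_def)
  have deg: "H * x g' \<in> Rg (sum c S + g')" if g': "g' \<in> S" for g'
  proof -
    have H: "H * x g' = (x g' * h g') * prod h (S - {g'})"
      unfolding H_def using S g' by (simp add: prod.remove mult_ac)
    have c: "sum c S + g' = (g' + c g') + sum c (S - {g'})"
      using S g' by (simp add: sum.remove algebra_simps)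
    have "prod h (S - {g'}) \<in> Rg (sum c (S - {g'}))"
      using h by (intro hom_prod) (simp_all add: S)
    then show ?thesis
      unfolding H c by (rule hom_mult[OF xh[OF g']])
  qed
  have "(\<Sum>g'\<in>S. H * x g') = 0"
    using assms(3) by (simp add: sum_distrib_left[symmetric])
  then have "H * x g = 0"
    using hom_sum_eq_zero_shift[OF S deg _ assms(4)] by simp
  then show ?thesis
    using \<open>H \<noteq> 0\<close> by simp
qed

lemma hcomp_eq:
  assumes S: "finite S" and x: "\<And>g. x g \<in> RH_deg Rg g" "\<And>g. g \<notin> S \<Longrightarrow> x g = 0"
    and a: "a = sum x S"
  shows "hcomp Rg d a = x d"
  unfolding hcomp_def
proof (rule the_equality)
  show "\<exists>x' S'. finite S' \<and> (\<forall>g\<in>S'. x' g \<in> RH_deg Rg g) \<and> a = sum x' S' \<and>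
      x d = (if d \<in> S' then x' d else 0)"
    using S x a by (intro exI[of _ x] exI[of _ S]) auto
next
  fix c
  assume "\<exists>x' S'. finite S' \<and> (\<forall>g\<in>S'. x' g \<in> RH_deg Rg g) \<and> a = sum x' S' \<and>
      c = (if d \<in> S' then x' d else 0)"
  then obtain x' S' where S': "finite S'" "\<forall>g\<in>S'. x' g \<in> RH_deg Rg g" "a = sum x' S'"
    and c: "c = (if d \<in> S' then x' d else 0)"
    by blast
  define x'' where "x'' g = (if g \<in> S' then x' g else 0)" for g
  let ?U = "S \<union> S'"
  have U: "finite ?U"
    using S S' by simp
  have "sum x ?U = sum x S"
    using U x by (intro sum.mono_neutral_right) auto
  moreover have "sum x'' ?U = sum x' S'"
    using U by (subst sum.mono_neutral_right[of ?U S']) (auto simp: x''_def)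
  ultimately have sum_diff: "(\<Sum>g\<in>?U. x g - x'' g) = 0"
    using a S' by (simp add: sum_subtractf)
  have "x g - x'' g \<in> RH_deg Rg g" for g
    using x S' by (auto simp: x''_def intro!: RH_deg_diff RH_deg_zero)
  then have "x g - x'' g = 0" if "g \<in> ?U" for g
    using RH_deg_sum_eq_zero[OF U _ sum_diff that] by blast
  then show "c = x d"
    using x(2) c by (cases "d \<in> ?U") (auto simp: x''_def)
qed

definition decomposable :: "'k \<Rightarrow> bool"
  where "decomposable a \<longleftrightarrow>
    (\<exists>S x. finite S \<and> (\<forall>g. x g \<in> RH_deg Rg g) \<and> (\<forall>g. g \<notin> S \<longrightarrow> x g = 0) \<and> a = sum x S)"

lemma decomposableE:
  assumes "decomposable a"
  obtains S where "finite S" "\<And>g. hcomp Rg g a \<in> RH_deg Rg g" "\<And>g. g \<notin> S \<Longrightarrow> hcomp Rg g a = 0"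
    "a = sum (\<lambda>g. hcomp Rg g a) S"
proof -
  obtain S x where "finite S" "\<forall>g. x g \<in> RH_deg Rg g" "\<forall>g. g \<notin> S \<longrightarrow> x g = 0" "a = sum x S"
    using assms unfolding decomposable_def by blast
  moreover from this have "hcomp Rg g a = x g" for g
    by (intro hcomp_eq) auto
  ultimately show ?thesis
    using that by simp
qed

lemma hcomp_RH_deg: "decomposable a \<Longrightarrow> hcomp Rg g a \<in> RH_deg Rg g"
  by (metis decomposableE)

lemma finite_hcomp_nonzero: "decomposable a \<Longrightarrow> finite {g. hcomp Rg g a \<noteq> 0}"
  by (metis (mono_tags, lifting) decomposableE finite_subset mem_Collect_eq subsetI)

lemma decomposable_sum_hcomp:
  assumes "decomposable a" "finite T" "{g. hcomp Rg g a \<noteq> 0} \<subseteq> T"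
  shows "a = (\<Sum>g\<in>T. hcomp Rg g a)"
proof -
  obtain S where S: "finite S" "\<And>g. g \<notin> S \<Longrightarrow> hcomp Rg g a = 0" "a = sum (\<lambda>g. hcomp Rg g a) S"
    using assms(1) decomposableE by metis
  have "sum (\<lambda>g. hcomp Rg g a) S = sum (\<lambda>g. hcomp Rg g a) (S \<inter> T)"
    using S assms(3) by (intro sum.mono_neutral_right) auto
  also have "\<dots> = sum (\<lambda>g. hcomp Rg g a) T"
    using assms S(1,2) by (intro sum.mono_neutral_left) auto
  finally show ?thesis
    using S by simp
qed

lemma hcomp_zero: "hcomp Rg g 0 = 0"
  by (rule hcomp_eq[of "{}" "\<lambda>_. 0"]) (simp_all add: RH_deg_zero)

lemma decomposable_zero: "decomposable 0"
  unfolding decomposable_def by (intro exI[of _ "{}"] exI[of _ "\<lambda>_. 0"]) (simp add: RH_deg_zero)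

lemma decomposable_add:
  assumes "decomposable a" "decomposable b"
  shows "decomposable (a + b)" and "hcomp Rg g (a + b) = hcomp Rg g a + hcomp Rg g b"
proof -
  obtain S where S: "finite S" "\<And>g. hcomp Rg g a \<in> RH_deg Rg g" "\<And>g. g \<notin> S \<Longrightarrow> hcomp Rg g a = 0"
    using assms(1) decomposableE by metis
  obtain T where T: "finite T" "\<And>g. hcomp Rg g b \<in> RH_deg Rg g" "\<And>g. g \<notin> T \<Longrightarrow> hcomp Rg g b = 0"
    using assms(2) decomposableE by metis
  define x where "x g = hcomp Rg g a + hcomp Rg g b" for g
  have fin: "finite (S \<union> T)"
    using S T by simp
  have "a = sum (\<lambda>g. hcomp Rg g a) (S \<union> T)" "b = sum (\<lambda>g. hcomp Rg g b) (S \<union> T)"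
    using assms fin S T by (auto intro!: decomposable_sum_hcomp)
  then have sum: "a + b = sum x (S \<union> T)"
    by (simp add: x_def sum.distrib)
  have x: "x g \<in> RH_deg Rg g" "g \<notin> S \<union> T \<Longrightarrow> x g = 0" for g
    using S T by (simp_all add: x_def RH_deg_add)
  show "decomposable (a + b)"
    unfolding decomposable_def using fin x sum by blast
  show "hcomp Rg g (a + b) = hcomp Rg g a + hcomp Rg g b"
    using hcomp_eq[OF fin x sum] by (simp add: x_def)
qed

lemma decomposable_sum: "finite I \<Longrightarrow> (\<And>i. i \<in> I \<Longrightarrow> decomposable (f i)) \<Longrightarrow> decomposable (sum f I)"
  by (induction I rule: finite_induct) (simp_all add: decomposable_zero decomposable_add)

lemma hcomp_sum:
  "finite I \<Longrightarrow> (\<And>i. i \<in> I \<Longrightarrow> decomposable (f i)) \<Longrightarrow>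
    hcomp Rg g (sum f I) = (\<Sum>i\<in>I. hcomp Rg g (f i))"
  by (induction I rule: finite_induct) (simp_all add: hcomp_zero decomposable_add decomposable_sum)

lemma decomposable_mult_hcomp_eq:
  assumes a: "decomposable a" and b: "decomposable b"
    and S: "finite S" "{g. hcomp Rg g a \<noteq> 0} \<subseteq> S" and T: "finite T" "{g. hcomp Rg g b \<noteq> 0} \<subseteq> T"
  shows "decomposable (a * b)"
    and "hcomp Rg e (a * b) = (\<Sum>g\<in>S. \<Sum>g'\<in>T. if g + g' = e then hcomp Rg g a * hcomp Rg g' b else 0)"
proof -
  define z where "z e = (\<Sum>g\<in>S. \<Sum>g'\<in>T. if g + g' = e then hcomp Rg g a * hcomp Rg g' b else 0)" for e
  define E where "E = (\<lambda>(g, g'). g + g') ` (S \<times> T)"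
  have fE: "finite E"
    using S T by (simp add: E_def)
  have zD: "z e \<in> RH_deg Rg e" for e
    unfolding z_def using S T hcomp_RH_deg[OF a] hcomp_RH_deg[OF b]
    by (intro RH_deg_sum) (auto intro: RH_deg_zero RH_deg_mult)
  have zz: "e \<notin> E \<Longrightarrow> z e = 0" for e
    unfolding z_def E_def by (intro sum.neutral ballI) force
  have "sum z E = (\<Sum>g\<in>S. \<Sum>g'\<in>T. \<Sum>e\<in>E. if g + g' = e then hcomp Rg g a * hcomp Rg g' b else 0)"
    unfolding z_def by (subst sum.swap) (subst (2) sum.swap, rule refl)
  also have "\<dots> = (\<Sum>g\<in>S. \<Sum>g'\<in>T. hcomp Rg g a * hcomp Rg g' b)"
  proof (intro sum.cong refl)
    fix g g' assume "g \<in> S" "g' \<in> T"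
    then have "g + g' \<in> E"
      by (force simp: E_def)
    then show "(\<Sum>e\<in>E. if g + g' = e then hcomp Rg g a * hcomp Rg g' b else 0) =
        hcomp Rg g a * hcomp Rg g' b"
      using fE by (simp add: sum.delta)
  qed
  also have "\<dots> = (\<Sum>g\<in>S. hcomp Rg g a) * (\<Sum>g'\<in>T. hcomp Rg g' b)"
    by (simp add: sum_product)
  also have "\<dots> = a * b"
    using decomposable_sum_hcomp[OF a S] decomposable_sum_hcomp[OF b T] by simp
  finally have e: "a * b = sum z E"
    by simp
  show "decomposable (a * b)"
    unfolding decomposable_def using fE zD zz e by blast
  show "hcomp Rg e (a * b) = (\<Sum>g\<in>S. \<Sum>g'\<in>T. if g + g' = e then hcomp Rg g a * hcomp Rg g' b else 0)"
    using hcomp_eq[OF fE zD zz e] by (simp add: z_def)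
qed

lemma decomposable_mult: "decomposable a \<Longrightarrow> decomposable b \<Longrightarrow> decomposable (a * b)"
  by (rule decomposable_mult_hcomp_eq(1)[OF _ _ finite_hcomp_nonzero order_refl finite_hcomp_nonzero order_refl])

text \<open>The components of \<open>b / h\<close>, with \<open>h\<close> homogeneous of degree \<open>c\<close>, are those of \<open>b\<close> divided by \<open>h\<close>
  and shifted by \<open>-c\<close>.\<close>

lemma RH_decomposable:
  assumes "a \<in> RH R Rg \<Gamma>"
  shows "decomposable a"
proof -
  obtain b h c where bh: "a = b / h" "b \<in> R" "h \<in> Rg c" "h \<noteq> 0"
    using assms unfolding RH_def homog_nz_def by blast
  obtain e S where S: "finite S" "\<forall>\<alpha>\<in>S. e \<alpha> \<in> Rg \<alpha>" and b: "b = sum e S"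
    using bh(2) by (subst (asm) R_eq_sums) blast
  define x where "x g = (if g + c \<in> S then e (g + c) / h else 0)" for g
  have "x g \<in> RH_deg Rg g" for g
    using RH_degI[of "e (g + c)" "g + c" h c] S bh by (simp add: x_def RH_deg_zero)
  moreover have "g \<notin> (\<lambda>\<alpha>. \<alpha> - c) ` S \<Longrightarrow> x g = 0" for g
    by (auto simp: x_def image_iff)
  moreover have "sum x ((\<lambda>\<alpha>. \<alpha> - c) ` S) = a"
  proof -
    have "sum x ((\<lambda>\<alpha>. \<alpha> - c) ` S) = (\<Sum>\<alpha>\<in>S. x (\<alpha> - c))"
      by (rule sum.reindex_cong[where l = "\<lambda>\<alpha>. \<alpha> - c"]) (auto simp: inj_on_def)
    also have "\<dots> = (\<Sum>\<alpha>\<in>S. e \<alpha> / h)"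
      by (rule sum.cong) (auto simp: x_def)
    also have "\<dots> = a"
      using bh b by (simp add: sum_divide_distrib)
    finally show ?thesis .
  qed
  ultimately show ?thesis
    unfolding decomposable_def using S(1) by (metis finite_imageI)
qed

end

section \<open>The content \<open>A\<^sub>f\<close> of a polynomial over \<open>R\<^sub>H\<close>\<close>

lemma sum_atMost_if_add_eq:
  fixes T :: "nat \<Rightarrow> nat \<Rightarrow> 'a::comm_monoid_add"
  assumes "k \<le> M"
  shows "(\<Sum>i\<le>M. \<Sum>j\<le>M. if i + j = k then T i j else 0) = (\<Sum>i\<le>k. T i (k - i))"
proof -
  have "(\<Sum>j\<le>M. if i + j = k then T i j else 0) = (if i \<le> k then T i (k - i) else 0)" for i
  proof -
    have "(\<Sum>j\<le>M. if i + j = k then T i j else 0) =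
        (\<Sum>j\<le>M. if j = k - i then (if i \<le> k then T i j else 0) else 0)"
      by (intro sum.cong refl) auto
    also have "\<dots> = (if i \<le> k then T i (k - i) else 0)"
      using assms by (simp add: sum.delta') (meson diff_le_self le_trans)
    finally show ?thesis .
  qed
  then have "(\<Sum>i\<le>M. \<Sum>j\<le>M. if i + j = k then T i j else 0) = (\<Sum>i\<le>M. if i \<le> k then T i (k - i) else 0)"
    by simp
  also have "\<dots> = (\<Sum>i\<le>k. T i (k - i))"
    using assms by (subst sum.mono_neutral_right[of "{..M}" "{..k}"]) auto
  finally show ?thesis .
qed

context graded
begin

lemma rsubmodule_Af [simp]: "rsubmodule R (Af R Rg f)"
  unfolding Af_def by simp

definition hcoeffs :: "'k poly \<Rightarrow> nat \<times> 'g \<Rightarrow> 'k"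
  where "hcoeffs f = (\<lambda>(i, d). hcomp Rg d (coeff f i))"

lemma hcoeffs_apply [simp]: "hcoeffs f (i, d) = hcomp Rg d (coeff f i)"
  by (simp add: hcoeffs_def)

lemma Af_eq_rcontent: "Af R Rg f = rcontent R (hcoeffs f)"
proof
  have "Cont R Rg (coeff f i) \<subseteq> rcontent R (hcoeffs f)" for i
    unfolding Cont_def
    by (rule rspan_minimal[OF rsubmodule_rcontent]) (auto intro: rcontent_mem[of "hcoeffs f" "(i, _)", simplified])
  then show "Af R Rg f \<subseteq> rcontent R (hcoeffs f)"
    unfolding Af_def by (intro rspan_minimal[OF rsubmodule_rcontent]) blast
  have "hcomp Rg d (coeff f i) \<in> Af R Rg f" for i d
  proof (cases "i \<le> degree f")
    case True
    have "hcomp Rg d (coeff f i) \<in> Cont R Rg (coeff f i)"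
      unfolding Cont_def by (rule rspan_base) simp
    with True show ?thesis
      unfolding Af_def by (intro rspan_base) auto
  next
    case False
    then show ?thesis
      unfolding Af_def by (simp add: coeff_eq_0 hcomp_zero rsubmodule_zero)
  qed
  then show "rcontent R (hcoeffs f) \<subseteq> Af R Rg f"
    unfolding rcontent_def Af_def[of R Rg f] by (intro rspan_minimal) auto
qed

definition hdegrees :: "'k poly \<Rightarrow> 'g set"
  where "hdegrees f = (\<Union>i\<le>degree f. {d. hcomp Rg d (coeff f i) \<noteq> 0})"

lemma finite_hdegrees: "\<forall>i. decomposable (coeff f i) \<Longrightarrow> finite (hdegrees f)"
  unfolding hdegrees_def by (auto intro!: finite_hcomp_nonzero)

lemma hcomp_coeff_nonzero_subset: "{d. hcomp Rg d (coeff f i) \<noteq> 0} \<subseteq> hdegrees f"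
  by (cases "i \<le> degree f") (auto simp: hdegrees_def coeff_eq_0 hcomp_zero)

lemma supp_hcoeffs_subset: "supp (hcoeffs f) \<subseteq> {..degree f} \<times> hdegrees f"
proof
  fix p assume "p \<in> supp (hcoeffs f)"
  then obtain i d where p: "p = (i, d)" "hcomp Rg d (coeff f i) \<noteq> 0"
    by (cases p) (auto simp: supp_def)
  then have "i \<le> degree f"
    by (metis hcomp_zero le_degree)
  then show "p \<in> {..degree f} \<times> hdegrees f"
    using p hcomp_coeff_nonzero_subset[of f i] by auto
qed

lemma finite_supp_hcoeffs: "\<forall>i. decomposable (coeff f i) \<Longrightarrow> finite (supp (hcoeffs f))"
  using supp_hcoeffs_subset[of f] finite_hdegrees by (meson finite_SigmaI finite_atMost finite_subset)

lemma supp_hcoeffs_subset_quot_group: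
  assumes "\<forall>i. decomposable (coeff f i)"
  shows "supp (hcoeffs f) \<subseteq> UNIV \<times> quot_group \<Gamma>"
proof
  fix p assume "p \<in> supp (hcoeffs f)"
  then obtain i d where "p = (i, d)" "hcomp Rg d (coeff f i) \<noteq> 0"
    by (cases p) (auto simp: supp_def)
  then show "p \<in> UNIV \<times> quot_group \<Gamma>"
    using assms hcomp_RH_deg RH_deg_nonzero_degree by blast
qed

lemma supp_hcoeffs_nonempty:
  assumes "\<forall>i. decomposable (coeff f i)" "f \<noteq> 0"
  shows "supp (hcoeffs f) \<noteq> {}"
proof -
  obtain i where i: "coeff f i \<noteq> 0"
    using assms(2) by (metis leading_coeff_0_iff)
  have "{d. hcomp Rg d (coeff f i) \<noteq> 0} \<noteq> {}"
    using decomposable_sum_hcomp[of "coeff f i" "{}"] assms(1) i by auto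
  then show ?thesis
    by (auto simp: supp_def)
qed

lemma decomposable_coeff_mult:
  assumes "\<forall>i. decomposable (coeff f i)" "\<forall>i. decomposable (coeff g i)"
  shows "decomposable (coeff (f * g) k)"
  unfolding coeff_mult using assms by (intro decomposable_sum decomposable_mult) simp_all

lemma convolution_hcoeffs:
  assumes f: "\<forall>i. decomposable (coeff f i)" and g: "\<forall>i. decomposable (coeff g i)"
  shows "convolution (hcoeffs f) (hcoeffs g) = hcoeffs (f * g)"
proof
  fix m :: "nat \<times> 'g"
  obtain k e where m: "m = (k, e)"
    by force
  define M where "M = k + degree f + degree g"
  define T where "T i j = (\<Sum>a\<in>hdegrees f. \<Sum>b\<in>hdegrees g.
    if a + b = e then hcoeffs f (i, a) * hcoeffs g (j, b) else 0)" for i j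
  have fin: "finite (hdegrees f)" "finite (hdegrees g)"
    using finite_hdegrees f g by auto
  have "convolution (hcoeffs f) (hcoeffs g) m = (\<Sum>p\<in>{..M} \<times> hdegrees f. \<Sum>q\<in>{..M} \<times> hdegrees g.
      if p + q = m then hcoeffs f p * hcoeffs g q else 0)"
    by (rule convolution_superset) (use fin supp_hcoeffs_subset[of f] supp_hcoeffs_subset[of g] in
        \<open>auto simp: M_def\<close>)
  also have "\<dots> = (\<Sum>i\<le>M. \<Sum>j\<le>M. if i + j = k then T i j else 0)"
    unfolding sum.cartesian_product' m T_def
    by (subst sum.swap) (auto intro!: sum.cong sum.neutral)
  also have "\<dots> = (\<Sum>i\<le>k. T i (k - i))"
    by (rule sum_atMost_if_add_eq) (simp add: M_def)
  also have "\<dots> = (\<Sum>i\<le>k. hcomp Rg e (coeff f i * coeff g (k - i)))"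
    unfolding T_def using f g fin hcomp_coeff_nonzero_subset
    by (simp add: decomposable_mult_hcomp_eq(2)[where S = "hdegrees f" and T = "hdegrees g"] cong: if_cong)
  also have "\<dots> = hcoeffs (f * g) m"
    using f g by (simp add: m coeff_mult hcomp_sum decomposable_mult)
  finally show "convolution (hcoeffs f) (hcoeffs g) m = hcoeffs (f * g) m" .
qed

end

section \<open>Finitely generated fractional ideals\<close>

context subring
begin

lemma common_denominator:
  assumes "quotient_field_of R" "finite T"
  shows "\<exists>d\<in>R. d \<noteq> 0 \<and> (\<forall>t\<in>T. d * t \<in> R)"
  using assms(2)
proof (induction T rule: finite_induct)
  case empty
  then show ?case
    using one_mem by (intro bexI[of _ 1]) auto
next
  case (insert x T)
  then obtain d where d: "d \<in> R" "d \<noteq> 0" "\<forall>t\<in>T. d * t \<in> R"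
    by auto
  obtain a b where ab: "a \<in> R" "b \<in> R" "b \<noteq> 0" "x = a / b"
    using assms(1) unfolding quotient_field_of_def by blast
  have "(d * b) * x = d * a"
    using ab by simp
  moreover have "(d * b) * t \<in> R" if "t \<in> T" for t
    using mult_mem[OF ab(2) d(3)[rule_format, OF that]] by (simp add: mult_ac)
  ultimately have "\<forall>t\<in>insert x T. (d * b) * t \<in> R"
    using d ab by (simp add: mult_mem)
  then show ?case
    using d ab by (intro bexI[of _ "d * b"]) (auto intro: mult_mem)
qed

lemma fg_frac_ideal_rspan:
  assumes "quotient_field_of R" "finite T" "t \<in> T" "t \<noteq> 0"
  shows "fg_frac_ideal R (rspan R T)"
proof -
  obtain d where d: "d \<in> R" "d \<noteq> 0" "\<forall>t\<in>T. d * t \<in> R"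
    using common_denominator[OF assms(1,2)] by blast
  have "rsubmodule R {x. d * x \<in> R}"
    unfolding rsubmodule_def by (auto intro: zero_mem add_mem mult_mem simp: distrib_left mult.left_commute)
  then have "rspan R T \<subseteq> {x. d * x \<in> R}"
    using d(3) by (intro rspan_minimal) auto
  moreover have "rspan R T \<noteq> {0}"
    using rspan_base[OF assms(3)] assms(4) by auto
  ultimately show ?thesis
    unfolding fg_frac_ideal_def frac_ideal_def using d assms(2) by auto
qed

lemma fg_frac_ideal_mmul:
  assumes "quotient_field_of R" "fg_frac_ideal R E" "fg_frac_ideal R F"
  shows "fg_frac_ideal R (mmul R E F)"
proof -
  have nonzero_generator: "\<exists>t\<in>T. t \<noteq> 0" if "rspan R T \<noteq> {0}" for T
    using that rspan_minimal[OF rsubmodule_singleton_zero, of T] rsubmodule_zero[OF rsubmodule_rspan]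
    by blast
  obtain S T where ST: "finite S" "E = rspan R S" "finite T" "F = rspan R T"
    using assms(2,3) unfolding fg_frac_ideal_def by blast
  then obtain s t where "s \<in> S" "s \<noteq> 0" "t \<in> T" "t \<noteq> 0"
    using assms(2,3) nonzero_generator unfolding fg_frac_ideal_def by metis
  moreover have "finite {s * t | s t. s \<in> S \<and> t \<in> T}"
    using ST by (auto intro: finite_image_set2)
  ultimately show ?thesis
    unfolding ST mmul_rspan by (intro fg_frac_ideal_rspan[OF assms(1), where t = "s * t"]) auto
qed

lemma fg_frac_ideal_mpow:
  assumes "quotient_field_of R" "fg_frac_ideal R E"
  shows "fg_frac_ideal R (mpow R E n)"
proof (induction n)
  case 0
  show ?case
    using fg_frac_ideal_rspan[OF assms(1), of "{1}" 1] by (simp add: mpow_0 rspan_one)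
next
  case (Suc n)
  then show ?case
    using fg_frac_ideal_mmul[OF assms] by (simp add: mpow_Suc)
qed

end

lemma eab_cancel:
  assumes "eab R st" "fg_frac_ideal R E" "fg_frac_ideal R F" "fg_frac_ideal R G"
    and "mmul R E F = mmul R E G"
  shows "st F = st G"
  using assms unfolding eab_def by (metis subset_antisym subset_refl)

section \<open>The content formula\<close>

context graded
begin

lemma quotient_field: "quotient_field_of R"
  using graded unfolding graded_domain_def by blast

lemma torsion_free_subgroup_quot_group: "torsion_free_subgroup (quot_group \<Gamma>)"
proof
  show "0 \<in> quot_group \<Gamma>"
    unfolding quot_group_def using Gamma_zero by force
next
  fix x y assume "x \<in> quot_group \<Gamma>" "y \<in> quot_group \<Gamma>"
  then obtain a b c d where "x = a - b" "y = c - d" "a \<in> \<Gamma>" "b \<in> \<Gamma>" "c \<in> \<Gamma>" "d \<in> \<Gamma>"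
    unfolding quot_group_def by blast
  then show "x + y \<in> quot_group \<Gamma>"
    unfolding quot_group_def
    by (intro CollectI exI[of _ "a + c"] exI[of _ "b + d"]) (simp add: Gamma_add algebra_simps)
next
  fix x assume "x \<in> quot_group \<Gamma>"
  then show "- x \<in> quot_group \<Gamma>"
    unfolding quot_group_def by force
next
  fix x :: 'g and n :: nat assume "x \<in> quot_group \<Gamma>" "n > 0" "nsmul n x = 0"
  then show "x = 0"
    using torsion_free_quot_group unfolding torsion_free_set_def by blast
qed

lemma Af_mult_subset:
  assumes "\<forall>i. decomposable (coeff f i)" "\<forall>i. decomposable (coeff g i)"
  shows "Af R Rg (f * g) \<subseteq> mmul R (Af R Rg f) (Af R Rg g)"
  using rcontent_convolution_subset[OF finite_supp_hcoeffs finite_supp_hcoeffs] assms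
  by (simp add: Af_eq_rcontent convolution_hcoeffs)

lemma Af_pow_mult_eq:
  assumes f: "\<forall>i. decomposable (coeff f i)" and g: "\<forall>i. decomposable (coeff g i)" "g \<noteq> 0"
  shows "\<exists>m\<ge>1. mmul R (mpow R (Af R Rg f) (m + 1)) (Af R Rg g) =
    mmul R (mpow R (Af R Rg f) m) (Af R Rg (f * g))"
proof -
  let ?A = "Af R Rg f" and ?B = "Af R Rg g" and ?C = "Af R Rg (f * g)"
  obtain t where t: "card (supp (hcoeffs g)) = Suc t"
    using finite_supp_hcoeffs[OF g(1)] supp_hcoeffs_nonempty[OF g] by (metis card_gt_0_iff gr0_implies_Suc)
  have "mmul R (mpow R ?A (Suc t)) ?B \<subseteq> mmul R (mpow R ?A t) ?C"
    using dedekind_mertens[OF torsion_free_subgroup.unique_product_nat_times[OF torsion_free_subgroup_quot_group]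
        finite_supp_hcoeffs[OF f] finite_supp_hcoeffs[OF g(1)]
        supp_hcoeffs_subset_quot_group[OF f] supp_hcoeffs_subset_quot_group[OF g(1)] supp_hcoeffs_nonempty[OF g]]
    by (simp add: Af_eq_rcontent convolution_hcoeffs[OF f g(1)] t)
  then have "mmul R ?A (mmul R (mpow R ?A (Suc t)) ?B) \<subseteq> mmul R ?A (mmul R (mpow R ?A t) ?C)"
    by (rule mmul_mono[OF order_refl])
  then have "mmul R (mpow R ?A (Suc t + 1)) ?B \<subseteq> mmul R (mpow R ?A (Suc t)) ?C"
    by (simp add: mpow_Suc mmul_ac)
  moreover have "mmul R (mpow R ?A (Suc t)) ?C \<subseteq> mmul R (mpow R ?A (Suc t)) (mmul R ?A ?B)"
    by (rule mmul_mono[OF order_refl Af_mult_subset[OF f g(1)]])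
  then have "mmul R (mpow R ?A (Suc t)) ?C \<subseteq> mmul R (mpow R ?A (Suc t + 1)) ?B"
    by (simp add: mpow_Suc mmul_ac)
  ultimately show ?thesis
    by (intro exI[of _ "Suc t"]) auto
qed

lemma fg_frac_ideal_Af:
  assumes "\<forall>i. decomposable (coeff f i)" "f \<noteq> 0"
  shows "fg_frac_ideal R (Af R Rg f)"
proof -
  obtain p where "hcoeffs f p \<noteq> 0"
    using supp_hcoeffs_nonempty[OF assms] by (auto simp: supp_def)
  moreover have "finite (range (hcoeffs f))"
    using finite_supp_hcoeffs[OF assms(1)] finite_subset[of "range (hcoeffs f)" "insert 0 (hcoeffs f ` supp (hcoeffs f))"]
    by (auto simp: supp_def)
  ultimately show ?thesis
    unfolding Af_eq_rcontent rcontent_def by (intro fg_frac_ideal_rspan[OF quotient_field]) auto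
qed

end

theorem proposition2p1:
  fixes \<Gamma> :: "'g::ab_group_add set" and Rg :: "'g \<Rightarrow> 'k::field set" and R :: "'k set"
    and f g :: "'k poly"
  assumes "graded_domain \<Gamma> Rg R"
    and "f \<noteq> 0" and "g \<noteq> 0"
    and "\<forall>i. coeff f i \<in> RH R Rg \<Gamma>" and "\<forall>i. coeff g i \<in> RH R Rg \<Gamma>"
  shows "(\<exists>m::nat. m \<ge> 1 \<and>
            mmul R (mpow R (Af R Rg f) (m + 1)) (Af R Rg g) = mmul R (mpow R (Af R Rg f) m) (Af R Rg (f * g)))
         \<and> (\<forall>st. eab R st \<longrightarrow> st (Af R Rg (f * g)) = st (mmul R (Af R Rg f) (Af R Rg g)))"
proof -
  interpret graded \<Gamma> Rg R
    by (rule graded.intro) fact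
  let ?A = "Af R Rg f" and ?B = "Af R Rg g" and ?C = "Af R Rg (f * g)"
  have f: "\<forall>i. decomposable (coeff f i)" and g: "\<forall>i. decomposable (coeff g i)"
    using assms(4,5) RH_decomposable by blast+
  obtain m where "m \<ge> 1" and m: "mmul R (mpow R ?A (m + 1)) ?B = mmul R (mpow R ?A m) ?C"
    using Af_pow_mult_eq[OF f g assms(3)] by blast
  moreover have "st ?C = st (mmul R ?A ?B)" if "eab R st" for st
  proof (rule eab_cancel[OF that])
    show "fg_frac_ideal R (mpow R ?A m)"
      using fg_frac_ideal_mpow[OF quotient_field fg_frac_ideal_Af[OF f assms(2)]] .
    show "fg_frac_ideal R ?C" "fg_frac_ideal R (mmul R ?A ?B)"
      using fg_frac_ideal_Af f g assms(2,3) decomposable_coeff_mult fg_frac_ideal_mmul[OF quotient_field]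
      by simp_all
    show "mmul R (mpow R ?A m) ?C = mmul R (mpow R ?A m) (mmul R ?A ?B)"
      using m by (simp add: mpow_Suc mmul_ac)
  qed
  ultimately show ?thesis
    by blast
qed

end
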